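(* Let $I\subset\mathbb{R}$ be a closed finite interval. Suppose $H\in C(\mathbb{T}^d\times\mathbb{R}^d\times I)$ satisfies (B1) and (B2), $k\in C(I\times I)$, and for $\alpha>0$ let $v^\alpha\in C(\mathbb{T}^d\times I)$ be the viscosity solution of (DP). Suppose there exist $c:I\to\mathbb{R}$ and $x_0\in\mathbb{T}^d$ such that, uniformly in $\xi\in I$, $$\lim_{\alpha\to0}\big(\alpha v^\alpha(x_0,\xi)+\Theta v^\alpha(x_0,\xi)\big)=-c(\xi).$$ Let $\tilde v^\alpha(x,\xi):=v^\alpha(x,\xi)-v^\alpha(x_0,\xi)$ and $$\overline v(x,\xi):=\lim_{r\to0}\sup\{\tilde v^\alpha(y,\eta): |x-y|+|\xi-\eta|+\alpha\le r\},\quad \underline v(x,\xi):=\lim_{r\to0}\inf\{\tilde v^\alpha(y,\eta): |x-y|+|\xi-\eta|+\alpha\le r\}$$ (with $\alpha>0$, $y\in\mathbb{T}^d$, $\eta\in I$). Then $\overline v$ is a viscosity subsolution and $\underline v$ a viscosity supersolution of $$H(x,Dv,\xi)+\int_I k(\xi,\eta)\big(v(x,\xi)-v(x,\eta)\big)\,d\eta=c(\xi)\quad\text{in }\mathbb{T}^d\times I.$$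
   Context: $|I|=1$; $0<k_0\le k\le k_1$. $\Theta v(x,\xi):=\int_I k(\xi,\eta)(v(x,\xi)-v(x,\eta))d\eta$. (DP): $\alpha v+H(x,Dv,\xi)+\Theta v=0$ in $\mathbb{T}^d\times I$ in the viscosity sense (test functions $\phi\in C^1(\mathbb{T}^d)$ touching $v(\cdot,\xi)$ at fixed $\xi$). (B1): $C_1|p|^m-C_2\le H(x,p,\xi)$ for constants $C_1,C_2>0$, $m>1$. (B2): for each $R>0$ a modulus $\omega_R$ with $|H(x,p,\xi)-H(y,p,\xi)|\le\omega_R(|x-y|)$ for $|p|\le R$. Sub/supersolution of $H+\Theta v=c(\xi)$: whenever $\phi\in C^1(\mathbb{T}^d)$, $\xi\in I$, $v(\cdot,\xi)-\phi$ has a local max (resp. min) at $\hat x$, then $H(\hat x,D\phi(\hat x),\xi)+\Theta v(\hat x,\xi)\le c(\xi)$ (resp. $\ge$). *)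

theory Defs
  imports "HOL-Analysis.Analysis"
begin

text \<open>Functions on the torus T^d = R^d / Z^d are represented as Z^d-periodic
  functions on R^d (type real^'d).\<close>

definition Zperiodic :: "(real^'d \<Rightarrow> 'b) \<Rightarrow> bool" where
  "Zperiodic f \<longleftrightarrow> (\<forall>x z. (\<forall>i. z $ i \<in> \<int>) \<longrightarrow> f (x + z) = f x)"

definition C1_torus :: "(real^'d \<Rightarrow> real) \<Rightarrow> (real^'d \<Rightarrow> real^'d) \<Rightarrow> bool" where
  "C1_torus \<phi> D\<phi> \<longleftrightarrow> Zperiodic \<phi> \<and>
     (\<forall>x. (\<phi> has_derivative (\<lambda>h. D\<phi> x \<bullet> h)) (at x)) \<and> continuous_on UNIV D\<phi>"

definition loc_max :: "('a::metric_space \<Rightarrow> real) \<Rightarrow> 'a \<Rightarrow> bool" where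
  "loc_max f x \<longleftrightarrow> (\<exists>e>0. \<forall>y. dist y x < e \<longrightarrow> f y \<le> f x)"

definition loc_min :: "('a::metric_space \<Rightarrow> real) \<Rightarrow> 'a \<Rightarrow> bool" where
  "loc_min f x \<longleftrightarrow> (\<exists>e>0. \<forall>y. dist y x < e \<longrightarrow> f x \<le> f y)"

definition modulus :: "(real \<Rightarrow> real) \<Rightarrow> bool" where
  "modulus \<omega> \<longleftrightarrow> \<omega> 0 = 0 \<and> (\<forall>r\<ge>0. \<omega> r \<ge> 0) \<and> mono_on {0..} \<omega> \<and>
     (\<omega> \<longlongrightarrow> 0) (at_right 0)"

definition Theta :: "real \<Rightarrow> real \<Rightarrow> (real \<Rightarrow> real \<Rightarrow> real) \<Rightarrow> (real^'d \<Rightarrow> real \<Rightarrow> real)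
    \<Rightarrow> real^'d \<Rightarrow> real \<Rightarrow> real" where
  "Theta a b k v x \<xi> = integral {a..b} (\<lambda>\<eta>. k \<xi> \<eta> * (v x \<xi> - v x \<eta>))"

definition visc_sub where
  "visc_sub a b H k c v \<longleftrightarrow> (\<forall>\<phi> D\<phi> \<xi> xh. C1_torus \<phi> D\<phi> \<longrightarrow> \<xi> \<in> {a..b} \<longrightarrow>
      loc_max (\<lambda>y. v y \<xi> - \<phi> y) xh \<longrightarrow>
      H xh (D\<phi> xh) \<xi> + Theta a b k v xh \<xi> \<le> c \<xi>)"

definition visc_super where
  "visc_super a b H k c v \<longleftrightarrow> (\<forall>\<phi> D\<phi> \<xi> xh. C1_torus \<phi> D\<phi> \<longrightarrow> \<xi> \<in> {a..b} \<longrightarrow>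
      loc_min (\<lambda>y. v y \<xi> - \<phi> y) xh \<longrightarrow>
      H xh (D\<phi> xh) \<xi> + Theta a b k v xh \<xi> \<ge> c \<xi>)"

definition DP_solution where
  "DP_solution a b H k \<alpha> v \<longleftrightarrow>
     (\<forall>\<xi>. Zperiodic (\<lambda>x. v x \<xi>)) \<and>
     continuous_on (UNIV \<times> {a..b}) (\<lambda>(x,\<xi>). v x \<xi>) \<and>
     (\<forall>\<phi> D\<phi> \<xi> xh. C1_torus \<phi> D\<phi> \<longrightarrow> \<xi> \<in> {a..b} \<longrightarrow>
        loc_max (\<lambda>y. v y \<xi> - \<phi> y) xh \<longrightarrow>
        \<alpha> * v xh \<xi> + H xh (D\<phi> xh) \<xi> + Theta a b k v xh \<xi> \<le> 0) \<and>
     (\<forall>\<phi> D\<phi> \<xi> xh. C1_torus \<phi> D\<phi> \<longrightarrow> \<xi> \<in> {a..b} \<longrightarrow>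
        loc_min (\<lambda>y. v y \<xi> - \<phi> y) xh \<longrightarrow>
        \<alpha> * v xh \<xi> + H xh (D\<phi> xh) \<xi> + Theta a b k v xh \<xi> \<ge> 0)"

definition relax_set :: "real \<Rightarrow> real \<Rightarrow> real^'d \<Rightarrow> real \<Rightarrow> real \<Rightarrow> (real \<times> (real^'d) \<times> real) set" where
  "relax_set a b x \<xi> r = {(\<alpha>, y, \<eta>). 0 < \<alpha> \<and> \<eta> \<in> {a..b} \<and> dist x y + \<bar>\<xi> - \<eta>\<bar> + \<alpha> \<le> r}"

definition upper_relax where
  "upper_relax a b v x0 x \<xi> = Lim (at_right (0::real))
     (\<lambda>r. SUP (\<alpha>, y, \<eta>) \<in> relax_set a b x \<xi> r. ereal (v \<alpha> y \<eta> - v \<alpha> x0 \<eta>))"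

definition lower_relax where
  "lower_relax a b v x0 x \<xi> = Lim (at_right (0::real))
     (\<lambda>r. INF (\<alpha>, y, \<eta>) \<in> relax_set a b x \<xi> r. ereal (v \<alpha> y \<eta> - v \<alpha> x0 \<eta>))"

end

theory Submission
  imports Defs
begin

text \<open>
  By coercivity (B1), at a point where a test function touches
  \<open>v\<^sup>\<alpha> - v\<^sup>\<alpha>(x\<^sub>0, \<cdot>)\<close> from above, its gradient is bounded by a power \<open>1/m < 1\<close> of the
  oscillation \<open>Om\<close> of \<open>v\<^sup>\<alpha>(\<cdot>, \<xi>) - v\<^sup>\<alpha>(x\<^sub>0, \<xi>)\<close>, plus a bound for the ergodic quantity
  \<open>\<alpha> v\<^sup>\<alpha>(x\<^sub>0, \<cdot>) + \<Theta> v\<^sup>\<alpha>(x\<^sub>0, \<cdot>)\<close>. A periodic function with such a viscosity gradient bound \<open>L\<close>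
  has oscillation at most \<open>(L + 1) d\<close>; since \<open>1/m < 1\<close> this sublinear implicit inequality bounds
  \<open>Om\<close> uniformly for small \<open>\<alpha>\<close>, so the half-relaxed limits are finite.

  This is the Barles--Perthame argument, adapted to the nonlocal term in \<open>\<xi>\<close>: the
  discount term vanishes, the nonlocal term of the approximations is bounded above, in the limit,
  by that of the upper limit (a reverse Fatou argument, using upper semicontinuity), and the ergodic
  hypothesis turns \<open>\<alpha> v\<^sup>\<alpha>(x\<^sub>0, \<xi>) + \<Theta> v\<^sup>\<alpha>(x\<^sub>0, \<xi>)\<close> into \<open>-c(\<xi>)\<close>. The supersolution property of
  the lower limit follows by applying the same argument to \<open>-v\<^sup>\<alpha>\<close>.
\<close>

section \<open>A periodic quadratic test function\<close>

text \<open>A \<open>\<int>\<^sup>d\<close>-periodic substitute for \<open>x \<mapsto> p \<bullet> (x - z) + A |x - z|\<^sup>2\<close>: it vanishes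
  at \<open>z\<close> with gradient \<open>p\<close>, and near \<open>z\<close> its second part is comparable to \<open>A |x - z|\<^sup>2\<close>.\<close>

definition torus_quad :: "real^'d \<Rightarrow> real^'d \<Rightarrow> real \<Rightarrow> real^'d \<Rightarrow> real" where
  "torus_quad z p A x =
     (\<Sum>i\<in>UNIV. p$i * (sin (2*pi*(x$i - z$i)) / (2*pi)) + A * (sin (pi*(x$i - z$i)))\<^sup>2)"

definition torus_quad_grad :: "real^'d \<Rightarrow> real^'d \<Rightarrow> real \<Rightarrow> real^'d \<Rightarrow> real^'d" where
  "torus_quad_grad z p A x =
     (\<chi> i. p$i * cos (2*pi*(x$i - z$i)) + A * pi * sin (2*pi*(x$i - z$i)))"

lemma torus_quad_coord_has_derivative:
  "((\<lambda>t::real. p * (sin (2*pi*(t - c)) / (2*pi)) + A * (sin (pi*(t - c)))\<^sup>2) has_real_derivative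
     (p * cos (2*pi*(t - c)) + A * pi * sin (2*pi*(t - c)))) (at t)"
proof -
  have "((\<lambda>t::real. p * (sin (2*pi*(t - c)) / (2*pi)) + A * (sin (pi*(t - c)))\<^sup>2) has_real_derivative
     (p * (cos (2*pi*(t - c)) * (2*pi*1) / (2*pi))
       + A * (2 * sin (pi*(t-c)) * (cos (pi*(t-c)) * (pi*1))))) (at t)"
    by (auto intro!: derivative_eq_intros)
  moreover have "sin (2*pi*(t - c)) = 2 * sin (pi*(t-c)) * cos (pi*(t-c))"
    using sin_double[of "pi*(t-c)"] by (simp add: mult.assoc)
  ultimately show ?thesis
    by (simp add: field_simps)
qed

lemma sin_sq_pi_add_int: "n \<in> \<int> \<Longrightarrow> (sin (pi * (t + n)))\<^sup>2 = (sin (pi * t))\<^sup>2"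
proof (elim Ints_cases)
  fix j :: int assume n: "n = of_int j"
  have "sin (pi * (t + n)) = sin (pi * t) * cos (of_int j * pi)"
    using n by (simp add: algebra_simps sin_add sin_times_pi_eq_0)
  moreover have "(cos (of_int j * pi))\<^sup>2 = 1"
    using cos_squared_eq[of "of_int j * pi"] by (simp add: sin_times_pi_eq_0)
  ultimately show ?thesis
    by (simp add: power_mult_distrib)
qed

lemma Zperiodic_torus_quad:
  fixes z p :: "real^'d"
  shows "Zperiodic (torus_quad z p A)"
  unfolding Zperiodic_def
proof (intro allI impI)
  fix x w :: "real^'d" assume w: "\<forall>i. w $ i \<in> \<int>"
  have "sin (2*pi*((x+w)$i - z$i)) = sin (2*pi*(x$i - z$i))" for i
  proof -
    have "sin (2*pi*((x+w)$i - z$i)) = sin (2*pi*(x$i - z$i) + 2*pi*(w$i))"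
      by (simp add: algebra_simps)
    also have "\<dots> = sin (2*pi*(x$i - z$i))"
      using w by (simp add: sin_add sin_integer_2pi cos_integer_2pi)
    finally show ?thesis .
  qed
  moreover have "(sin (pi*((x+w)$i - z$i)))\<^sup>2 = (sin (pi*(x$i - z$i)))\<^sup>2" for i
    using sin_sq_pi_add_int[of "w$i" "x$i - z$i"] w by (simp add: algebra_simps)
  ultimately show "torus_quad z p A (x + w) = torus_quad z p A x"
    unfolding torus_quad_def by simp
qed

lemma C1_torus_torus_quad:
  fixes z p :: "real^'d"
  shows "C1_torus (torus_quad z p A) (torus_quad_grad z p A)"
  unfolding C1_torus_def
proof (intro conjI allI Zperiodic_torus_quad)
  fix x :: "real^'d"
  have "((\<lambda>x. \<Sum>i\<in>UNIV. p$i * (sin (2*pi*(x$i - z$i)) / (2*pi)) + A * (sin (pi*(x$i - z$i)))\<^sup>2)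
      has_derivative
      (\<lambda>h. \<Sum>i\<in>UNIV. (p$i * cos (2*pi*(x$i - z$i)) + A * pi * sin (2*pi*(x$i - z$i))) * h$i)) (at x)"
  proof (rule has_derivative_sum)
    fix i :: 'd
    have coord: "((\<lambda>x::real^'d. x$i) has_derivative (\<lambda>h. h$i)) (at x)"
      by (rule bounded_linear_imp_has_derivative) (rule bounded_linear_vec_nth)
    show "((\<lambda>x. p$i * (sin (2*pi*(x$i - z$i)) / (2*pi)) + A * (sin (pi*(x$i - z$i)))\<^sup>2)
      has_derivative (\<lambda>h. (p$i * cos (2*pi*(x$i - z$i)) + A * pi * sin (2*pi*(x$i - z$i))) * h$i))
      (at x)"
      using has_derivative_compose[OF coord torus_quad_coord_has_derivative
          [of "p$i" "z$i" A "x$i", unfolded has_field_derivative_def]]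
      by (simp add: o_def)
  qed
  then show "(torus_quad z p A has_derivative (\<lambda>h. torus_quad_grad z p A x \<bullet> h)) (at x)"
    unfolding torus_quad_def torus_quad_grad_def inner_vec_def by simp
next
  show "continuous_on UNIV (torus_quad_grad z p A)"
    unfolding torus_quad_grad_def by (intro continuous_on_vec_lambda continuous_intros)
qed

lemma torus_quad_center [simp]: "torus_quad z p A z = 0"
  unfolding torus_quad_def by simp

lemma torus_quad_grad_center [simp]: "torus_quad_grad z p A z = p"
  unfolding torus_quad_grad_def by (simp add: vec_eq_iff)

lemma torus_quad_nonneg: "0 \<le> A \<Longrightarrow> 0 \<le> torus_quad z 0 A y"
  unfolding torus_quad_def by (intro sum_nonneg) simp

lemma torus_quad_pos:
  fixes z y :: "real^'d"
  assumes "0 < A" "y \<noteq> z" "dist y z < 1"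
  shows "0 < torus_quad z 0 A y"
proof (rule ccontr)
  assume "\<not> 0 < torus_quad z 0 A y"
  then have "(\<Sum>i\<in>UNIV. A * (sin (pi*(y$i - z$i)))\<^sup>2) = 0"
    using torus_quad_nonneg[of A z y] assms(1) unfolding torus_quad_def by simp
  then have zero: "sin ((y$i - z$i) * pi) = 0" for i
    using assms(1) by (subst (asm) sum_nonneg_eq_0_iff) (auto simp: mult.commute)
  have "y$i = z$i" for i
  proof -
    obtain j where j: "y$i - z$i = of_int j"
      using zero[of i] by (auto simp: sin_times_pi_eq_0 elim: Ints_cases)
    have "\<bar>(y - z)$i\<bar> \<le> norm (y - z)" by (rule component_le_norm_cart)
    then have "\<bar>of_int j :: real\<bar> < 1" using j assms(3) by (simp add: dist_norm)
    then have "j = 0" by linarith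
    then show ?thesis using j by simp
  qed
  then show False using assms(2) by (simp add: vec_eq_iff)
qed

lemma C1_torus_add:
  assumes "C1_torus \<phi> D\<phi>" "C1_torus \<psi> D\<psi>"
  shows "C1_torus (\<lambda>x. \<phi> x + \<psi> x) (\<lambda>x. D\<phi> x + D\<psi> x)"
  unfolding C1_torus_def
proof (intro conjI allI)
  show "Zperiodic (\<lambda>x. \<phi> x + \<psi> x)" using assms unfolding C1_torus_def Zperiodic_def by simp
  show "continuous_on UNIV (\<lambda>x. D\<phi> x + D\<psi> x)"
    using assms unfolding C1_torus_def by (intro continuous_on_add) auto
  fix x
  have "((\<lambda>x. \<phi> x + \<psi> x) has_derivative (\<lambda>h. D\<phi> x \<bullet> h + D\<psi> x \<bullet> h)) (at x)"
    using assms unfolding C1_torus_def by (intro has_derivative_add) auto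
  then show "((\<lambda>x. \<phi> x + \<psi> x) has_derivative (\<lambda>h. (D\<phi> x + D\<psi> x) \<bullet> h)) (at x)"
    by (simp add: inner_add_left)
qed

lemma C1_torus_uminus:
  assumes "C1_torus \<phi> D\<phi>"
  shows "C1_torus (\<lambda>x. - \<phi> x) (\<lambda>x. - D\<phi> x)"
  unfolding C1_torus_def
proof (intro conjI allI)
  show "Zperiodic (\<lambda>x. - \<phi> x)" using assms unfolding C1_torus_def Zperiodic_def by simp
  show "continuous_on UNIV (\<lambda>x. - D\<phi> x)"
    using assms unfolding C1_torus_def by (intro continuous_on_minus) auto
  fix x
  have "((\<lambda>x. - \<phi> x) has_derivative (\<lambda>h. - (D\<phi> x \<bullet> h))) (at x)"
    using assms unfolding C1_torus_def by (intro has_derivative_minus) auto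
  then show "((\<lambda>x. - \<phi> x) has_derivative (\<lambda>h. - D\<phi> x \<bullet> h)) (at x)" by simp
qed

lemma C1_torus_continuous_on:
  assumes "C1_torus \<phi> D\<phi>"
  shows "continuous_on UNIV \<phi>"
  using assms has_derivative_continuous unfolding C1_torus_def
  by (blast intro: continuous_at_imp_continuous_on)

lemma one_minus_cos_le_half_sq: "1 - cos (s::real) \<le> s\<^sup>2 / 2"
proof -
  have "cos s = 1 - 2 * (sin (s/2))\<^sup>2" using cos_double_sin[of "s/2"] by simp
  moreover have "(sin (s/2))\<^sup>2 \<le> (s/2)\<^sup>2"
    using abs_sin_x_le_abs_x[of "s/2"] by (metis abs_ge_zero power2_abs power_mono)
  ultimately show ?thesis by (simp add: power_divide)
qed

lemma sin_ge_half_self: assumes "0 \<le> s" "s \<le> 1" shows "s / 2 \<le> sin (s::real)"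
proof -
  have "(\<lambda>s. sin s - s/2) 0 \<le> (\<lambda>s. sin s - s/2) s"
  proof (rule DERIV_nonneg_imp_nondecreasing[OF assms(1)])
    fix x assume x: "0 \<le> x" "x \<le> s"
    have "((\<lambda>s. sin s - s/2) has_real_derivative (cos x - 1/2)) (at x)"
      by (auto intro!: derivative_eq_intros)
    moreover have "x\<^sup>2 \<le> 1" using x assms by (simp add: power_le_one)
    then have "0 \<le> cos x - 1/2" using one_minus_cos_le_half_sq[of x] by simp
    ultimately show "\<exists>y. ((\<lambda>s. sin s - s/2) has_real_derivative y) (at x) \<and> 0 \<le> y" by blast
  qed
  then show ?thesis by simp
qed

lemma sin_pi_sq_ge: assumes "\<bar>t\<bar> \<le> 1/4" shows "2 * t\<^sup>2 \<le> (sin (pi * t))\<^sup>2"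
proof -
  have small: "\<bar>pi * t\<bar> \<le> 1"
  proof -
    have "\<bar>pi * t\<bar> \<le> pi * (1/4)" using assms by (simp add: abs_mult)
    then show ?thesis using pi_less_4 by simp
  qed
  have "\<bar>pi * t\<bar> / 2 \<le> \<bar>sin (pi * t)\<bar>"
  proof (cases "0 \<le> t")
    case True then show ?thesis using sin_ge_half_self[of "pi*t"] small by simp
  next
    case False
    then have "pi * t \<le> 0" by (simp add: mult_nonneg_nonpos)
    moreover have "-(pi*t) / 2 \<le> sin (-(pi*t))"
      using small \<open>pi * t \<le> 0\<close> by (intro sin_ge_half_self) auto
    ultimately show ?thesis by simp
  qed
  then have "(\<bar>pi * t\<bar> / 2)\<^sup>2 \<le> (sin (pi * t))\<^sup>2"
    by (metis abs_ge_zero divide_nonneg_nonneg power2_abs power_mono zero_le_numeral)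
  moreover have "(\<bar>pi * t\<bar> / 2)\<^sup>2 = pi\<^sup>2 * t\<^sup>2 / 4" by (simp add: power_divide power_mult_distrib)
  moreover have "8 \<le> pi\<^sup>2"
    using mult_mono[of 3 pi 3 pi] pi_gt3 by (simp add: power2_eq_square)
  then have "8 * t\<^sup>2 \<le> pi\<^sup>2 * t\<^sup>2" by (intro mult_right_mono) auto
  ultimately show ?thesis by linarith
qed

lemma sin_2pi_linear_error: "\<bar>t - sin (2*pi*t) / (2*pi)\<bar> \<le> 2 * pi\<^sup>2 * \<bar>t\<bar>^3"
proof -
  define f where "f = (\<lambda>t::real. t - sin (2*pi*t) / (2*pi))"
  have df: "(f has_real_derivative (1 - cos (2 * pi * s))) (at s)" for s
    unfolding f_def by (auto intro!: derivative_eq_intros)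
  have bnd: "\<bar>1 - cos (2 * pi * s)\<bar> \<le> 2 * pi\<^sup>2 * \<bar>t\<bar>\<^sup>2" if "\<bar>s\<bar> \<le> \<bar>t\<bar>" for s
  proof -
    have "1 - cos (2 * pi * s) \<le> 2 * pi\<^sup>2 * \<bar>s\<bar>\<^sup>2"
      using one_minus_cos_le_half_sq[of "2 * pi * s"] by (simp add: power_mult_distrib)
    also have "\<dots> \<le> 2 * pi\<^sup>2 * \<bar>t\<bar>\<^sup>2" using that by (intro mult_left_mono power_mono) auto
    finally show ?thesis using cos_le_one[of "2 * pi * s"] by simp
  qed
  have "\<bar>f t - f 0\<bar> \<le> 2 * pi\<^sup>2 * \<bar>t\<bar>^3"
  proof (cases t "0::real" rule: linorder_cases)
    case less
    obtain z where z: "t < z" "z < 0" "f 0 - f t = (0 - t) * (1 - cos (2 * pi * z))"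
      using MVT2[OF less, of f "\<lambda>s. 1 - cos (2 * pi * s)"] df by blast
    have "\<bar>f t - f 0\<bar> = \<bar>t\<bar> * \<bar>1 - cos (2 * pi * z)\<bar>" using z by (simp add: abs_mult abs_minus_commute)
    also have "\<dots> \<le> \<bar>t\<bar> * (2 * pi\<^sup>2 * \<bar>t\<bar>\<^sup>2)" using z bnd[of z] by (intro mult_left_mono) auto
    finally show ?thesis by (simp add: power2_eq_square power3_eq_cube mult_ac)
  next
    case greater
    obtain z where z: "0 < z" "z < t" "f t - f 0 = (t - 0) * (1 - cos (2 * pi * z))"
      using MVT2[OF greater, of f "\<lambda>s. 1 - cos (2 * pi * s)"] df by blast
    have "\<bar>f t - f 0\<bar> = \<bar>t\<bar> * \<bar>1 - cos (2 * pi * z)\<bar>" using z by (simp add: abs_mult)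
    also have "\<dots> \<le> \<bar>t\<bar> * (2 * pi\<^sup>2 * \<bar>t\<bar>\<^sup>2)" using z bnd[of z] by (intro mult_left_mono) auto
    finally show ?thesis by (simp add: power2_eq_square power3_eq_cube mult_ac)
  qed simp
  then show ?thesis unfolding f_def by simp
qed

lemma norm_add_le_first_order:
  fixes u h :: "'a::real_inner"
  assumes r: "norm u = r" "0 < r" "norm h \<le> r"
  shows "norm (u + h) \<le> r + inner u h / r + (norm h)\<^sup>2 / r"
proof -
  define q where "q = inner u h / r"
  define s where "s = (norm h)\<^sup>2 / r"
  have "\<bar>inner u h\<bar> \<le> r * norm h" using Cauchy_Schwarz_ineq2[of u h] r by simp
  then have "\<bar>q\<bar> \<le> norm h" unfolding q_def using r by (simp add: abs_div pos_divide_le_eq mult.commute)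
  moreover have "0 \<le> s" unfolding s_def using r by simp
  ultimately have nonneg: "0 \<le> r + q + s" using r by linarith
  have "(norm (u + h))\<^sup>2 = (norm u)\<^sup>2 + 2 * inner u h + (norm h)\<^sup>2"
    by (simp add: power2_norm_eq_inner inner_add_left inner_add_right inner_commute)
  also have "\<dots> = r\<^sup>2 + 2 * inner u h + (norm h)\<^sup>2" using r by simp
  also have "\<dots> \<le> (r + q + s)\<^sup>2"
  proof -
    have "(r + q + s)\<^sup>2 = r\<^sup>2 + 2 * r * q + 2 * r * s + (q + s)\<^sup>2"
      by (simp add: power2_eq_square algebra_simps)
    moreover have "2 * r * q = 2 * inner u h" "2 * r * s = 2 * (norm h)\<^sup>2"
      unfolding q_def s_def using r by simp_all
    ultimately show ?thesis by simp
  qed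
  finally have "norm (u + h) \<le> r + q + s" using nonneg by (simp add: power2_le_iff_abs_le)
  then show ?thesis unfolding q_def s_def .
qed

text \<open>The coefficient \<open>4 L\<close> absorbs the cubic error of \<open>sin\<close> (\<open>sin_2pi_linear_error\<close>).\<close>

lemma linear_quadratic_le_trig:
  fixes h q L s :: real
  assumes h: "\<bar>h\<bar> \<le> 1/4" and q: "\<bar>q\<bar> \<le> L" and s: "0 \<le> s"
  shows "q * h + s * h\<^sup>2 \<le> q * (sin (2*pi*h) / (2*pi)) + (4 * L + s) * (sin (pi*h))\<^sup>2"
proof -
  have L0: "0 \<le> L" using q by linarith
  have "q * (h - sin (2*pi*h) / (2*pi)) \<le> \<bar>q\<bar> * \<bar>h - sin (2*pi*h) / (2*pi)\<bar>"
    by (metis abs_ge_self abs_mult)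
  also have "\<dots> \<le> L * (2 * pi\<^sup>2 * \<bar>h\<bar>^3)"
    using sin_2pi_linear_error[of h] q by (intro mult_mono) auto
  also have "\<dots> \<le> L * (8 * h\<^sup>2)"
  proof (rule mult_left_mono[OF _ L0])
    have "pi\<^sup>2 \<le> 16" using mult_mono[of pi 4 pi 4] pi_less_4 by (simp add: power2_eq_square)
    have "2 * pi\<^sup>2 * \<bar>h\<bar>^3 = 2 * pi\<^sup>2 * \<bar>h\<bar> * h\<^sup>2"
      by (simp add: power2_eq_square power3_eq_cube)
    also have "\<dots> \<le> 2 * 16 * (1/4) * h\<^sup>2"
      using \<open>pi\<^sup>2 \<le> 16\<close> h by (intro mult_right_mono mult_mono) auto
    finally show "2 * pi\<^sup>2 * \<bar>h\<bar>^3 \<le> 8 * h\<^sup>2" by simp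
  qed
  finally have "q * h \<le> q * (sin (2*pi*h) / (2*pi)) + (4 * L) * (2 * h\<^sup>2)"
    by (simp add: algebra_simps)
  moreover have "(4 * L + s) * (2 * h\<^sup>2) \<le> (4 * L + s) * (sin (pi*h))\<^sup>2"
    using sin_pi_sq_ge[OF h] L0 s by (intro mult_left_mono) auto
  moreover have "0 \<le> s * h\<^sup>2" using s by simp
  ultimately show ?thesis by (simp add: algebra_simps)
qed

text \<open>The linearisation of the cone \<open>x \<mapsto> L |x - y'|\<close> at \<open>z\<close> is corrected by its curvature,
  \<open>(L/r) |x - z|\<^sup>2\<close> with \<open>r = |z - y'|\<close> (\<open>norm_add_le_first_order\<close>).\<close>

lemma cone_le_torus_quad:
  fixes z y' x :: "real^'d" and L :: real
  assumes r0: "0 < dist z y'" and L0: "0 \<le> L"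
    and near: "dist x z < min (dist z y') (1/4)"
  shows "L * (dist x y' - dist z y') \<le>
     torus_quad z ((L / dist z y') *\<^sub>R (z - y')) (4 * L + L / dist z y') x"
proof -
  define r where "r = dist z y'"
  define u where "u = z - y'"
  define h where "h = x - z"
  define p where "p = (L / r) *\<^sub>R u"
  have r0': "0 < r" using r0 r_def by simp
  have nu: "norm u = r" unfolding u_def r_def by (simp add: dist_norm)
  have nh: "norm h < min r (1/4)" using near unfolding h_def r_def by (simp add: dist_norm)
  have np: "norm p = L" unfolding p_def using nu r0' L0 by simp
  have "norm (u + h) \<le> r + inner u h / r + (norm h)\<^sup>2 / r"
    using norm_add_le_first_order[of u r h] nu r0' nh by simp
  then have "L * (dist x y' - r) \<le> L * (inner u h / r + (norm h)\<^sup>2 / r)"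
    using L0 by (intro mult_left_mono) (auto simp: u_def h_def dist_norm)
  also have "\<dots> = inner p h + (L / r) * (h \<bullet> h)"
    unfolding p_def by (simp add: algebra_simps power2_norm_eq_inner)
  also have "\<dots> = (\<Sum>i\<in>UNIV. p$i * h$i + (L/r) * (h$i)\<^sup>2)"
    by (simp add: inner_vec_def sum.distrib sum_distrib_left power2_eq_square)
  also have "\<dots> \<le> (\<Sum>i\<in>UNIV. p$i * (sin (2*pi*(h$i)) / (2*pi)) + (4 * L + L/r) * (sin (pi*(h$i)))\<^sup>2)"
  proof (intro sum_mono linear_quadratic_le_trig)
    show "\<bar>h$i\<bar> \<le> 1/4" "\<bar>p$i\<bar> \<le> L" "0 \<le> L/r" for i
      using component_le_norm_cart[of h i] component_le_norm_cart[of p i] nh np L0 r0' by auto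
  qed
  also have "\<dots> = torus_quad z p (4 * L + L / r) x" unfolding torus_quad_def h_def by simp
  finally show ?thesis unfolding p_def u_def r_def .
qed

section \<open>Periodic functions with a viscosity gradient bound\<close>

lemma Zperiodic_reduce_unit_cube:
  fixes x :: "real^'d"
  assumes "Zperiodic f"
  obtains x' where "x' \<in> cbox 0 1" "f x = f x'"
proof
  define z :: "real^'d" where "z = (\<chi> i. of_int \<lfloor>x$i\<rfloor>)"
  have "x = (\<chi> i. frac (x$i)) + z" unfolding z_def by (simp add: vec_eq_iff frac_def)
  moreover have "\<forall>i. z$i \<in> \<int>" unfolding z_def by simp
  ultimately show "f x = f (\<chi> i. frac (x$i))" using assms unfolding Zperiodic_def by metis
  show "(\<chi> i. frac (x$i)) \<in> cbox 0 1" unfolding mem_box_cart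
    by (simp add: frac_ge_0 less_imp_le[OF frac_lt_1])
qed

lemma Zperiodic_attains_max:
  fixes f :: "real^'d \<Rightarrow> real"
  assumes "continuous_on UNIV f" "Zperiodic f"
  obtains xm where "\<And>x. f x \<le> f xm"
proof -
  have "(0::real^'d) \<in> cbox 0 1" by (simp add: mem_box_cart)
  then have "cbox (0::real^'d) 1 \<noteq> {}" by blast
  then obtain xm where "\<forall>y\<in>cbox 0 1. f y \<le> f xm"
    using continuous_attains_sup[OF compact_cbox _ continuous_on_subset[OF assms(1)]] by blast
  then show ?thesis
    using that Zperiodic_reduce_unit_cube[OF assms(2)] by metis
qed

definition lattice_coset :: "real^'d \<Rightarrow> (real^'d) set" where
  "lattice_coset y = {w. \<forall>i. w$i - y$i \<in> \<int>}"

lemma closed_lattice_coset: "closed (lattice_coset y)"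
proof -
  have "lattice_coset y = (\<Inter>i. (\<lambda>w. w$i - y$i) -` \<int>)" unfolding lattice_coset_def by auto
  then show ?thesis
    by (simp add: closed_INT closed_vimage closed_Ints continuous_intros)
qed

lemma lattice_coset_self: "y \<in> lattice_coset y"
  unfolding lattice_coset_def by simp

lemma lattice_coset_add_int: "w \<in> lattice_coset y \<Longrightarrow> \<forall>i. z$i \<in> \<int> \<Longrightarrow> w + z \<in> lattice_coset y"
  unfolding lattice_coset_def
  by (auto simp: diff_add_eq[symmetric] intro!: Ints_add)

lemma infdist_lattice_coset_add_int_le:
  assumes "\<forall>i. z$i \<in> \<int>"
  shows "infdist (x + z) (lattice_coset y) \<le> infdist x (lattice_coset y)"
proof -
  obtain w where w: "w \<in> lattice_coset y" "infdist x (lattice_coset y) = dist x w"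
    using infdist_attains_inf[OF closed_lattice_coset] lattice_coset_self by blast
  have "infdist (x + z) (lattice_coset y) \<le> dist (x + z) (w + z)"
    using lattice_coset_add_int[OF w(1) assms] by (rule infdist_le)
  then show ?thesis using w by (simp add: dist_norm)
qed

lemma Zperiodic_infdist_lattice_coset: "Zperiodic (\<lambda>x. infdist x (lattice_coset y))"
  unfolding Zperiodic_def
proof (intro allI impI antisym)
  fix x z :: "real^'a" assume z: "\<forall>i. z$i \<in> \<int>"
  then show "infdist (x + z) (lattice_coset y) \<le> infdist x (lattice_coset y)"
    by (rule infdist_lattice_coset_add_int_le)
  have "\<forall>i. (-z)$i \<in> \<int>" using z by simp
  from infdist_lattice_coset_add_int_le[OF this, of "x + z" y]
  show "infdist x (lattice_coset y) \<le> infdist (x + z) (lattice_coset y)" by simp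
qed

lemma infdist_lattice_coset_le_card:
  fixes x y :: "real^'d"
  shows "infdist x (lattice_coset y) \<le> real CARD('d)"
proof -
  define f where "f = (\<chi> i. frac (x$i - y$i))"
  have "x - f \<in> lattice_coset y" unfolding lattice_coset_def f_def by (simp add: frac_def)
  then have "infdist x (lattice_coset y) \<le> dist x (x - f)" by (rule infdist_le)
  also have "\<dots> = norm f" by (simp add: dist_norm)
  also have "\<dots> \<le> (\<Sum>i\<in>UNIV. \<bar>f $ i\<bar>)" by (rule norm_le_l1_cart)
  also have "\<dots> \<le> (\<Sum>i\<in>(UNIV::'d set). 1)"
    unfolding f_def by (intro sum_mono) (simp add: frac_ge_0 less_imp_le[OF frac_lt_1])
  finally show ?thesis by simp
qed

text \<open>Penalise \<open>u\<close> by the cone \<open>L' \<cdot> dist(\<cdot>, y + \<int>\<^sup>d)\<close> with \<open>L' = L + 1\<close>.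
  A maximum point off the lattice would be touched from above by a periodic quadratic with
  gradient of norm \<open>L'\<close> (\<open>cone_le_torus_quad\<close>), contradicting the gradient bound; so the maximum
  sits on \<open>y + \<int>\<^sup>d\<close>, where \<open>u\<close> equals \<open>u y\<close>.\<close>

lemma Zperiodic_osc_le_of_viscosity_grad_bound:
  fixes u :: "real^'d \<Rightarrow> real" and L :: real
  assumes cont: "continuous_on UNIV u" and per: "Zperiodic u" and L0: "0 \<le> L"
    and grad: "\<And>\<phi> D\<phi> xh. C1_torus \<phi> D\<phi> \<Longrightarrow> loc_max (\<lambda>y. u y - \<phi> y) xh \<Longrightarrow> norm (D\<phi> xh) \<le> L"
  shows "u x - u y \<le> (L + 1) * real CARD('d)"
proof -
  define L' where "L' = L + 1"
  have L'0: "0 < L'" using L0 L'_def by simp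
  define g where "g = (\<lambda>x. u x - L' * infdist x (lattice_coset y))"
  have "continuous_on UNIV g"
    unfolding g_def by (intro continuous_intros cont continuous_on_infdist)
  moreover have "Zperiodic g"
    using per Zperiodic_infdist_lattice_coset[of y] unfolding Zperiodic_def g_def by simp
  ultimately obtain xm where xm: "\<And>x. g x \<le> g xm" using Zperiodic_attains_max by blast
  show ?thesis
  proof (cases "infdist xm (lattice_coset y) = 0")
    case True
    then have "xm \<in> lattice_coset y"
      using in_closed_iff_infdist_zero[OF closed_lattice_coset] lattice_coset_self by blast
    then have "\<forall>i. (xm - y)$i \<in> \<int>" unfolding lattice_coset_def by simp
    then have "u (y + (xm - y)) = u y" using per unfolding Zperiodic_def by blast
    then have "u x \<le> u y + L' * infdist x (lattice_coset y)" using xm[of x] True unfolding g_def by simp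
    also have "\<dots> \<le> u y + L' * real CARD('d)"
      using infdist_lattice_coset_le_card[of x y] L'0 by simp
    finally show ?thesis unfolding L'_def by simp
  next
    case False
    obtain y' where y': "y' \<in> lattice_coset y" "infdist xm (lattice_coset y) = dist xm y'"
      using infdist_attains_inf[OF closed_lattice_coset] lattice_coset_self by blast
    have r0: "0 < dist xm y'" using False y' infdist_nonneg[of xm] by simp
    define p where "p = (L' / dist xm y') *\<^sub>R (xm - y')"
    define A where "A = 4 * L' + L' / dist xm y'"
    have "loc_max (\<lambda>x. u x - torus_quad xm p A x) xm"
      unfolding loc_max_def
    proof (intro exI[of _ "min (dist xm y') (1/4)"] conjI allI impI)
      show "0 < min (dist xm y') (1/4)" using r0 by simp
      fix x assume x: "dist x xm < min (dist xm y') (1/4)"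
      have "u x - u xm \<le> L' * infdist x (lattice_coset y) - L' * infdist xm (lattice_coset y)"
        using xm[of x] unfolding g_def by simp
      also have "\<dots> \<le> L' * (dist x y' - dist xm y')"
        using infdist_le[OF y'(1), of x] y'(2) L'0 by (simp add: algebra_simps)
      also have "\<dots> \<le> torus_quad xm p A x"
        unfolding p_def A_def by (rule cone_le_torus_quad[OF r0 less_imp_le[OF L'0] x])
      finally show "u x - torus_quad xm p A x \<le> u xm - torus_quad xm p A xm" by simp
    qed
    then have "norm (torus_quad_grad xm p A xm) \<le> L" by (rule grad[OF C1_torus_torus_quad])
    moreover have "norm (torus_quad_grad xm p A xm) = L'"
      unfolding p_def using r0 L'0 by (simp add: dist_norm)
    ultimately show ?thesis using L'_def by simp
  qed
qed

section \<open>The nonlocal operator\<close>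

lemma continuous_on_curry_fst:
  assumes "continuous_on (S \<times> T) (\<lambda>(x, y). f x y)" "y \<in> T"
  shows "continuous_on S (\<lambda>x. f x y)"
proof -
  have "continuous_on S (\<lambda>x. (\<lambda>(x, y). f x y) (x, y))"
    by (rule continuous_on_compose2[OF assms(1)]) (use assms(2) in \<open>auto intro!: continuous_intros\<close>)
  then show ?thesis by simp
qed

lemma continuous_on_curry_snd:
  assumes "continuous_on (S \<times> T) (\<lambda>(x, y). f x y)" "x \<in> S"
  shows "continuous_on T (f x)"
proof -
  have "continuous_on T (\<lambda>y. (\<lambda>(x, y). f x y) (x, y))"
    by (rule continuous_on_compose2[OF assms(1)]) (use assms(2) in \<open>auto intro!: continuous_intros\<close>)
  then show ?thesis by simp
qed

lemma integral_ge_const_unit: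
  fixes g :: "real \<Rightarrow> real"
  assumes "b - a = 1" "g integrable_on {a..b}" "\<And>\<eta>. \<eta> \<in> {a..b} \<Longrightarrow> c \<le> g \<eta>"
  shows "c \<le> integral {a..b} g"
  using integral_le[OF integrable_const_ivl assms(2), of c] assms by (simp add: content_real)

lemma integral_le_const_unit:
  fixes g :: "real \<Rightarrow> real"
  assumes "b - a = 1" "g integrable_on {a..b}" "\<And>\<eta>. \<eta> \<in> {a..b} \<Longrightarrow> g \<eta> \<le> c"
  shows "integral {a..b} g \<le> c"
  using integral_le[OF assms(2) integrable_const_ivl, of c] assms by (simp add: content_real)

lemma abs_integral_le_const_unit:
  fixes g :: "real \<Rightarrow> real"
  assumes "b - a = 1" "g integrable_on {a..b}" "\<And>\<eta>. \<eta> \<in> {a..b} \<Longrightarrow> \<bar>g \<eta>\<bar> \<le> c"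
  shows "\<bar>integral {a..b} g\<bar> \<le> c"
  using integral_ge_const_unit[OF assms(1,2), of "- c"] integral_le_const_unit[OF assms(1,2), of c]
    assms(3) by (force simp: abs_le_iff)

lemma bounded_measurable_integrable_on:
  fixes f :: "real \<Rightarrow> real"
  assumes "f \<in> borel_measurable (lebesgue_on {a..b})" "\<And>x. x \<in> {a..b} \<Longrightarrow> \<bar>f x\<bar> \<le> C"
  shows "f integrable_on {a..b}"
  by (rule measurable_bounded_by_integrable_imp_integrable_real[OF assms(1) integrable_const_ivl])
    (use assms(2) in \<open>auto intro: borel_closed sets_completionI_sets simp flip: sets_lborel\<close>)

lemma Theta_integrable:
  fixes k :: "real \<Rightarrow> real \<Rightarrow> real" and v :: "real^'d \<Rightarrow> real \<Rightarrow> real"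
  assumes "continuous_on {a..b} (k \<xi>)" "continuous_on {a..b} (v x)"
  shows "(\<lambda>\<eta>. k \<xi> \<eta> * (v x \<xi> - v x \<eta>)) integrable_on {a..b}"
  using continuous_on_mult[OF assms(1) continuous_on_diff[OF continuous_on_const assms(2)]]
  by (intro integrable_continuous_interval) simp

lemma Theta_uminus: "Theta a b k (\<lambda>x \<xi>. - u x \<xi>) x \<xi> = - Theta a b k u x \<xi>"
proof -
  have "(\<lambda>\<eta>. k \<xi> \<eta> * (- u x \<xi> - - u x \<eta>)) = (\<lambda>\<eta>. - (k \<xi> \<eta> * (u x \<xi> - u x \<eta>)))"
    by (simp add: fun_eq_iff algebra_simps)
  then show ?thesis unfolding Theta_def by simp
qed

lemma Theta_normalize:
  fixes k :: "real \<Rightarrow> real \<Rightarrow> real" and v :: "real^'d \<Rightarrow> real \<Rightarrow> real"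
  assumes "continuous_on {a..b} (k \<xi>)" "continuous_on {a..b} (v x)" "continuous_on {a..b} (v x0)"
  shows "Theta a b k v x \<xi> = Theta a b k (\<lambda>x \<xi>. v x \<xi> - v x0 \<xi>) x \<xi> + Theta a b k v x0 \<xi>"
proof -
  have "(\<lambda>\<eta>. k \<xi> \<eta> * (v x \<xi> - v x \<eta>))
      = (\<lambda>\<eta>. k \<xi> \<eta> * ((v x \<xi> - v x0 \<xi>) - (v x \<eta> - v x0 \<eta>)) + k \<xi> \<eta> * (v x0 \<xi> - v x0 \<eta>))"
    by (simp add: fun_eq_iff algebra_simps)
  moreover have "(\<lambda>\<eta>. k \<xi> \<eta> * ((v x \<xi> - v x0 \<xi>) - (v x \<eta> - v x0 \<eta>))) integrable_on {a..b}"
    using continuous_on_mult[OF assms(1) continuous_on_diff[OF continuous_on_diff continuous_on_diff]]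
      assms by (intro integrable_continuous_interval) (simp add: continuous_on_const)
  ultimately show ?thesis
    unfolding Theta_def using Theta_integrable[of a b k \<xi> v x0, OF assms(1,3)]
    by (simp add: integral_add)
qed

lemma Theta_ge_neg_osc:
  fixes k :: "real \<Rightarrow> real \<Rightarrow> real" and v :: "real^'d \<Rightarrow> real \<Rightarrow> real"
  assumes "b - a = 1" "continuous_on {a..b} (k \<xi>)" "continuous_on {a..b} (v x)"
    and kb: "\<And>\<eta>. \<eta> \<in> {a..b} \<Longrightarrow> 0 \<le> k \<xi> \<eta> \<and> k \<xi> \<eta> \<le> k1"
    and Om: "0 \<le> Om" and osc: "\<And>\<eta>. \<eta> \<in> {a..b} \<Longrightarrow> - Om \<le> v x \<xi> - v x \<eta>"
  shows "- (k1 * Om) \<le> Theta a b k v x \<xi>"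
  unfolding Theta_def
proof (rule integral_ge_const_unit[OF assms(1) Theta_integrable[of a b k \<xi> v x, OF assms(2,3)]])
  fix \<eta> assume \<eta>: "\<eta> \<in> {a..b}"
  have "k \<xi> \<eta> * (- Om) \<le> k \<xi> \<eta> * (v x \<xi> - v x \<eta>)" using mult_left_mono[OF osc[OF \<eta>]] kb[OF \<eta>] by simp
  moreover have "k1 * (- Om) \<le> k \<xi> \<eta> * (- Om)"
    using mult_right_mono_neg[of "k \<xi> \<eta>" k1 "-Om"] kb[OF \<eta>] Om by simp
  ultimately show "- (k1 * Om) \<le> k \<xi> \<eta> * (v x \<xi> - v x \<eta>)" by simp
qed

lemma continuous_on_Theta:
  assumes k_cont: "continuous_on ({a..b} \<times> {a..b}) (\<lambda>(\<xi>, \<eta>). k \<xi> \<eta>)"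
    and "continuous_on {a..b} (u x)"
  shows "continuous_on {a..b} (\<lambda>\<xi>. Theta a b k u x \<xi>)"
proof -
  have c1: "continuous_on ({a..b} \<times> {a..b}) (\<lambda>p. u x (fst p))"
    by (rule continuous_on_compose2[OF assms(2)]) (auto intro!: continuous_intros)
  have c2: "continuous_on ({a..b} \<times> {a..b}) (\<lambda>p. u x (snd p))"
    by (rule continuous_on_compose2[OF assms(2)]) (auto intro!: continuous_intros)
  have "continuous_on ({a..b} \<times> cbox a b) (\<lambda>(\<xi>, \<eta>). k \<xi> \<eta> * (u x \<xi> - u x \<eta>))"
    using continuous_on_mult[OF k_cont[unfolded case_prod_beta] continuous_on_diff[OF c1 c2]]
    by (simp add: case_prod_beta)
  from integral_continuous_on_param[OF this] show ?thesis unfolding Theta_def by simp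
qed

section \<open>A priori bound on the normalised discounted solutions\<close>

lemma bounded_image_Zperiodic_cylinder:
  fixes w :: "real^'d \<Rightarrow> real \<Rightarrow> real"
  assumes cont: "continuous_on (UNIV \<times> {a..b}) (\<lambda>(x, \<xi>). w x \<xi>)"
    and per: "\<And>\<xi>. Zperiodic (\<lambda>x. w x \<xi>)"
  shows "bounded ((\<lambda>(x, \<xi>). w x \<xi>) ` (UNIV \<times> {a..b}))"
proof -
  have "(\<lambda>(x, \<xi>). w x \<xi>) ` (UNIV \<times> {a..b}) \<subseteq> (\<lambda>(x, \<xi>). w x \<xi>) ` (cbox 0 1 \<times> {a..b})"
  proof clarify
    fix x \<xi> assume "\<xi> \<in> {a..b}"
    moreover obtain x' where "x' \<in> cbox 0 1" "w x \<xi> = w x' \<xi>"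
      using Zperiodic_reduce_unit_cube[OF per] .
    ultimately show "w x \<xi> \<in> (\<lambda>(x, \<xi>). w x \<xi>) ` (cbox 0 1 \<times> {a..b})" by force
  qed
  moreover have "compact ((\<lambda>(x, \<xi>). w x \<xi>) ` (cbox (0::real^'d) 1 \<times> {a..b}))"
    by (rule compact_continuous_image[OF continuous_on_subset[OF cont]]) (auto intro: compact_Times)
  ultimately show ?thesis using bounded_subset compact_imp_bounded by blast
qed

lemma DP_solution_touching_grad_bound:
  fixes H :: "real^'d \<Rightarrow> real^'d \<Rightarrow> real \<Rightarrow> real" and u :: "real^'d \<Rightarrow> real \<Rightarrow> real"
  assumes I_len: "b - a = 1" and C1: "C1 > 0" and m: "m > 1"
    and B1: "\<And>x p \<xi>. \<xi> \<in> {a..b} \<Longrightarrow> C1 * norm p powr m - C2 \<le> H x p \<xi>"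
    and k_cont: "continuous_on ({a..b} \<times> {a..b}) (\<lambda>(\<xi>, \<eta>). k \<xi> \<eta>)"
    and kb: "\<And>\<xi> \<eta>. \<xi> \<in> {a..b} \<Longrightarrow> \<eta> \<in> {a..b} \<Longrightarrow> 0 \<le> k \<xi> \<eta> \<and> k \<xi> \<eta> \<le> k1"
    and sol: "DP_solution a b H k \<alpha> u" and \<alpha>: "0 \<le> \<alpha>" "\<alpha> \<le> 1"
    and Om: "0 \<le> Om" "\<And>x \<eta>. \<eta> \<in> {a..b} \<Longrightarrow> \<bar>u x \<eta> - u x0 \<eta>\<bar> \<le> Om"
    and \<phi>: "C1_torus \<phi> D\<phi>" and \<xi>: "\<xi> \<in> {a..b}"
    and E: "\<bar>\<alpha> * u x0 \<xi> + Theta a b k u x0 \<xi>\<bar> \<le> E"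
    and touch: "loc_max (\<lambda>y. (u y \<xi> - u x0 \<xi>) - \<phi> y) xh"
  shows "norm (D\<phi> xh) \<le> ((C2 + E + (1 + 2 * k1) * Om) / C1) powr (1/m)"
proof -
  define w where "w = (\<lambda>x \<xi>. u x \<xi> - u x0 \<xi>)"
  have cont: "continuous_on (UNIV \<times> {a..b}) (\<lambda>(x,\<xi>). u x \<xi>)"
    using sol unfolding DP_solution_def by blast
  have "loc_max (\<lambda>y. u y \<xi> - \<phi> y) xh" using touch unfolding loc_max_def by auto
  then have sub: "\<alpha> * u xh \<xi> + H xh (D\<phi> xh) \<xi> + Theta a b k u xh \<xi> \<le> 0"
    using sol \<phi> \<xi> unfolding DP_solution_def by blast
  have kc: "continuous_on {a..b} (k \<xi>)" by (rule continuous_on_curry_snd[OF k_cont \<xi>])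
  have uc: "continuous_on {a..b} (u y)" for y by (rule continuous_on_curry_snd[OF cont]) simp
  have "- (k1 * (2 * Om)) \<le> Theta a b k w xh \<xi>"
  proof (rule Theta_ge_neg_osc[where v=w and x=xh and k=k and \<xi>=\<xi>, OF I_len kc])
    show "continuous_on {a..b} (w xh)" unfolding w_def by (intro continuous_on_diff uc)
    show "\<And>\<eta>. \<eta> \<in> {a..b} \<Longrightarrow> - (2 * Om) \<le> w xh \<xi> - w xh \<eta>"
      using Om(2)[OF \<xi>, of xh] Om(2)[of _ xh] unfolding w_def by (force simp: abs_le_iff)
  qed (use kb \<xi> Om in auto)
  moreover have "Theta a b k u xh \<xi> = Theta a b k w xh \<xi> + Theta a b k u x0 \<xi>"
    unfolding w_def by (rule Theta_normalize[where v=u and k=k and \<xi>=\<xi> and x=xh and x0=x0, OF kc uc uc])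
  moreover have "- (\<alpha> * w xh \<xi>) \<le> Om"
  proof -
    have "\<bar>\<alpha> * w xh \<xi>\<bar> \<le> 1 * Om"
      unfolding abs_mult w_def using \<alpha> Om \<xi> by (intro mult_mono) auto
    then show ?thesis by simp
  qed
  moreover have "\<alpha> * u xh \<xi> = \<alpha> * w xh \<xi> + \<alpha> * u x0 \<xi>" unfolding w_def by (simp add: algebra_simps)
  ultimately have "H xh (D\<phi> xh) \<xi> \<le> E + (1 + 2 * k1) * Om"
    using sub E by (simp add: algebra_simps abs_le_iff)
  then have "norm (D\<phi> xh) powr m \<le> (C2 + E + (1 + 2 * k1) * Om) / C1"
    using B1[OF \<xi>, where x=xh and p="D\<phi> xh"] C1 by (simp add: field_simps)
  then have "(norm (D\<phi> xh) powr m) powr (1/m) \<le> ((C2 + E + (1 + 2 * k1) * Om) / C1) powr (1/m)"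
    using m by (intro powr_mono2) auto
  then show ?thesis using m by (simp add: powr_powr)
qed

lemma DP_solution_osc_estimate:
  fixes H :: "real^'d \<Rightarrow> real^'d \<Rightarrow> real \<Rightarrow> real" and u :: "real^'d \<Rightarrow> real \<Rightarrow> real"
  assumes I_len: "b - a = 1" and C1: "C1 > 0" and m: "m > 1"
    and B1: "\<And>x p \<xi>. \<xi> \<in> {a..b} \<Longrightarrow> C1 * norm p powr m - C2 \<le> H x p \<xi>"
    and k_cont: "continuous_on ({a..b} \<times> {a..b}) (\<lambda>(\<xi>, \<eta>). k \<xi> \<eta>)"
    and kb: "\<And>\<xi> \<eta>. \<xi> \<in> {a..b} \<Longrightarrow> \<eta> \<in> {a..b} \<Longrightarrow> 0 \<le> k \<xi> \<eta> \<and> k \<xi> \<eta> \<le> k1"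
    and sol: "DP_solution a b H k \<alpha> u" and \<alpha>: "0 \<le> \<alpha>" "\<alpha> \<le> 1"
    and E: "\<And>\<xi>. \<xi> \<in> {a..b} \<Longrightarrow> \<bar>\<alpha> * u x0 \<xi> + Theta a b k u x0 \<xi>\<bar> \<le> E"
  obtains Om where "0 \<le> Om"
    "Om \<le> real CARD('d) + real CARD('d) * ((C2 + E) / C1 + ((1 + 2 * k1) / C1) * Om) powr (1/m)"
    "\<And>x \<xi>. \<xi> \<in> {a..b} \<Longrightarrow> \<bar>u x \<xi> - u x0 \<xi>\<bar> \<le> Om"
proof -
  have ab: "a \<le> b" using I_len by simp
  define w where "w = (\<lambda>x \<xi>. u x \<xi> - u x0 \<xi>)"
  have cont: "continuous_on (UNIV \<times> {a..b}) (\<lambda>(x,\<xi>). u x \<xi>)"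
    and per: "\<And>\<xi>. Zperiodic (\<lambda>x. u x \<xi>)"
    using sol unfolding DP_solution_def by blast+
  have "continuous_on (UNIV \<times> {a..b}) (\<lambda>p. (\<lambda>(x,\<xi>). u x \<xi>) (x0, snd p))"
    by (rule continuous_on_compose2[OF cont]) (auto intro!: continuous_intros)
  then have wcont: "continuous_on (UNIV \<times> {a..b}) (\<lambda>(x,\<xi>). w x \<xi>)"
    using continuous_on_diff[OF cont] unfolding w_def by (simp add: case_prod_beta)
  have wper: "Zperiodic (\<lambda>x. w x \<xi>)" for \<xi>
    using per[of \<xi>] unfolding Zperiodic_def w_def by simp
  define W where "W = (\<lambda>t. \<bar>t\<bar>) ` (\<lambda>(x,\<xi>). w x \<xi>) ` (UNIV \<times> {a..b})"
  have W: "\<bar>w x \<xi>\<bar> \<in> W" if "\<xi> \<in> {a..b}" for x \<xi> unfolding W_def using that by force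
  have "bdd_above W"
    using bounded_image_Zperiodic_cylinder[OF wcont wper]
    unfolding W_def bounded_real bdd_above_def by fastforce
  define Om where "Om = Sup W"
  have wOm: "\<bar>w x \<xi>\<bar> \<le> Om" if "\<xi> \<in> {a..b}" for x \<xi>
    unfolding Om_def by (rule cSup_upper[OF W[OF that] \<open>bdd_above W\<close>])
  have Om0: "0 \<le> Om" using wOm[of a x0] ab unfolding w_def by simp
  define L where "L = ((C2 + E + (1 + 2 * k1) * Om) / C1) powr (1/m)"
  have grad: "norm (D\<phi> xh) \<le> L"
    if "\<xi> \<in> {a..b}" "C1_torus \<phi> D\<phi>" "loc_max (\<lambda>y. w y \<xi> - \<phi> y) xh" for \<xi> \<phi> D\<phi> xh
    unfolding L_def using that wOm Om0
    by (intro DP_solution_touching_grad_bound[OF I_len C1 m B1 k_cont kb sol \<alpha>, of Om])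
      (auto simp: w_def E)
  have osc: "w x \<xi> - w y \<xi> \<le> (L + 1) * real CARD('d)" if \<xi>: "\<xi> \<in> {a..b}" for x y \<xi>
    by (rule Zperiodic_osc_le_of_viscosity_grad_bound[OF continuous_on_curry_fst[OF wcont \<xi>] wper])
      (use grad[OF \<xi>] in \<open>auto simp: L_def\<close>)
  have "\<bar>w x \<xi>\<bar> \<le> (L + 1) * real CARD('d)" if "\<xi> \<in> {a..b}" for x \<xi>
    using osc[OF that, of x x0] osc[OF that, of x0 x] unfolding w_def by (simp add: abs_le_iff)
  then have "Om \<le> (L + 1) * real CARD('d)"
    unfolding Om_def W_def using ab by (intro cSup_least) auto
  moreover have "(C2 + E + (1 + 2 * k1) * Om) / C1 = (C2 + E) / C1 + ((1 + 2 * k1) / C1) * Om"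
    by (simp add: add_divide_distrib field_simps)
  ultimately show ?thesis
    using that[OF Om0] wOm unfolding L_def w_def by (simp add: algebra_simps)
qed

lemma powr_le_powr_add_linear:
  fixes t T \<beta> :: real
  assumes t: "0 \<le> t" and T: "0 < T" and \<beta>: "0 < \<beta>" "\<beta> < 1"
  shows "t powr \<beta> \<le> T powr \<beta> + T powr (\<beta> - 1) * t"
proof (cases "t \<le> T")
  case True
  then have "t powr \<beta> \<le> T powr \<beta>" using t \<beta> by (intro powr_mono2) auto
  then show ?thesis using t by (simp add: add_increasing2)
next
  case False
  then have "t powr (\<beta> - 1) * t = t powr (\<beta> - 1) * t powr 1" using T by simp
  also have "\<dots> = t powr \<beta>" by (simp only: powr_add[symmetric]) simp
  finally have "t powr \<beta> = t powr (\<beta> - 1) * t" by simp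
  also have "\<dots> \<le> T powr (\<beta> - 1) * t"
    using powr_mono2'[of "\<beta> - 1" T t] False T t \<beta> by (intro mult_right_mono) auto
  finally show ?thesis by (simp add: add_increasing)
qed

text \<open>An implicit bound \<open>Om \<le> P + Q (R + S Om)\<^sup>\<beta>\<close> with \<open>\<beta> < 1\<close> gives an explicit one: bound
  the power by its tangent at \<open>T\<close>, chosen so that the linear part is \<open>\<le> Om/2\<close>.\<close>

lemma le_of_le_sublinear:
  fixes Om P Q R S \<beta> :: real
  assumes nn: "0 \<le> P" "0 \<le> Q" "0 \<le> R" "0 \<le> S" and \<beta>: "0 < \<beta>" "\<beta> < 1"
    and Om0: "0 \<le> Om" and ineq: "Om \<le> P + Q * (R + S * Om) powr \<beta>"
  shows "Om \<le> 2 * (P + Q * ((2*Q*S+1) powr (1/(1-\<beta>))) powr \<beta>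
                   + Q * ((2*Q*S+1) powr (1/(1-\<beta>))) powr (\<beta> - 1) * R)"
proof -
  define T where "T = (2*Q*S+1) powr (1/(1-\<beta>))"
  have "0 \<le> Q * S" using nn by simp
  then have QS1: "0 < 2*Q*S+1" by simp
  have T0: "0 < T" unfolding T_def using QS1 by simp
  have "T powr (\<beta> - 1) = (2*Q*S+1) powr ((1/(1-\<beta>)) * (\<beta> - 1))" unfolding T_def by (rule powr_powr)
  also have "(1/(1-\<beta>)) * (\<beta> - 1) = -1" using \<beta> by (simp add: field_simps)
  finally have Tb: "T powr (\<beta> - 1) = 1 / (2*Q*S+1)" using QS1 by (simp add: powr_minus_divide)
  have "(R + S * Om) powr \<beta> \<le> T powr \<beta> + T powr (\<beta> - 1) * (R + S * Om)"
    using nn Om0 by (intro powr_le_powr_add_linear[OF _ T0 \<beta>]) simp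
  then have "Om \<le> P + Q * (T powr \<beta> + T powr (\<beta> - 1) * (R + S * Om))"
    using ineq nn(2) by (smt (verit) mult_left_mono)
  also have "\<dots> = P + Q * T powr \<beta> + Q * T powr (\<beta> - 1) * R + (Q * S / (2*Q*S+1)) * Om"
    unfolding Tb by (simp add: algebra_simps add_divide_distrib)
  also have "(Q * S / (2*Q*S+1)) * Om \<le> (1/2) * Om"
    using QS1 Om0 by (intro mult_right_mono) (simp_all add: divide_le_eq)
  finally show ?thesis unfolding T_def by simp
qed

lemma uniform_limit_at_right_eventually_bounded:
  fixes f :: "real \<Rightarrow> 'a::topological_space \<Rightarrow> real"
  assumes lim: "uniform_limit S f g (at_right 0)" and S: "compact S"
    and cont: "\<forall>\<alpha>>0. continuous_on S (f \<alpha>)"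
  shows "\<exists>\<alpha>0 E. 0 < \<alpha>0 \<and> \<alpha>0 \<le> 1 \<and> 0 \<le> E \<and>
    (\<forall>\<alpha> x. 0 < \<alpha> \<longrightarrow> \<alpha> \<le> \<alpha>0 \<longrightarrow> x \<in> S \<longrightarrow> \<bar>f \<alpha> x\<bar> \<le> E)"
proof -
  have "\<forall>\<^sub>F \<alpha> in at_right 0. \<forall>x\<in>S. dist (f \<alpha> x) (g x) < 1"
    using lim unfolding uniform_limit_iff by simp
  then obtain \<alpha>1 where \<alpha>1: "0 < \<alpha>1" "\<And>\<alpha> x. 0 < \<alpha> \<Longrightarrow> \<alpha> < \<alpha>1 \<Longrightarrow> x \<in> S \<Longrightarrow> \<bar>f \<alpha> x - g x\<bar> < 1"
    unfolding eventually_at_right_field by (auto simp: dist_real_def)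
  define \<alpha>0 where "\<alpha>0 = min (\<alpha>1/2) 1"
  have \<alpha>0: "0 < \<alpha>0" "\<alpha>0 < \<alpha>1" "\<alpha>0 \<le> 1" unfolding \<alpha>0_def using \<alpha>1 by auto
  have "bounded (f \<alpha>0 ` S)"
    by (rule compact_imp_bounded[OF compact_continuous_image[OF cont[rule_format, OF \<alpha>0(1)] S]])
  then obtain M where M: "\<And>x. x \<in> S \<Longrightarrow> \<bar>f \<alpha>0 x\<bar> \<le> M" unfolding bounded_iff by auto
  have "\<bar>f \<alpha> x\<bar> \<le> max 0 (M + 2)" if "0 < \<alpha>" "\<alpha> \<le> \<alpha>0" "x \<in> S" for \<alpha> x
  proof -
    have "\<bar>f \<alpha> x - g x\<bar> < 1" using \<alpha>1(2)[OF that(1) _ that(3)] that(2) \<alpha>0(2) by simp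
    moreover have "\<bar>f \<alpha>0 x - g x\<bar> < 1" using \<alpha>1(2)[OF \<alpha>0(1,2) that(3)] .
    moreover have "\<bar>f \<alpha>0 x\<bar> \<le> M" using M[OF that(3)] .
    ultimately have "\<bar>f \<alpha> x\<bar> \<le> M + 2" unfolding abs_less_iff abs_le_iff by linarith
    then show ?thesis by simp
  qed
  then show ?thesis using \<alpha>0 by (intro exI[of _ \<alpha>0] exI[of _ "max 0 (M + 2)"]) auto
qed

lemma DP_solutions_uniform_osc_bound:
  fixes H :: "real^'d \<Rightarrow> real^'d \<Rightarrow> real \<Rightarrow> real" and v :: "real \<Rightarrow> real^'d \<Rightarrow> real \<Rightarrow> real"
  assumes I_len: "b - a = 1" and C1: "C1 > 0" and C2: "C2 \<ge> 0" and m: "m > 1"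
    and B1: "\<And>x p \<xi>. \<xi> \<in> {a..b} \<Longrightarrow> C1 * norm p powr m - C2 \<le> H x p \<xi>"
    and k_cont: "continuous_on ({a..b} \<times> {a..b}) (\<lambda>(\<xi>, \<eta>). k \<xi> \<eta>)"
    and kb: "\<And>\<xi> \<eta>. \<xi> \<in> {a..b} \<Longrightarrow> \<eta> \<in> {a..b} \<Longrightarrow> 0 \<le> k \<xi> \<eta> \<and> k \<xi> \<eta> \<le> k1"
    and v_sol: "\<And>\<alpha>. \<alpha> > 0 \<Longrightarrow> DP_solution a b H k \<alpha> (v \<alpha>)"
    and ergodic: "uniform_limit {a..b}
        (\<lambda>\<alpha> \<xi>. \<alpha> * v \<alpha> x0 \<xi> + Theta a b k (v \<alpha>) x0 \<xi>) (\<lambda>\<xi>. - c \<xi>) (at_right 0)"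
  obtains \<alpha>0 B where "0 < \<alpha>0"
    "\<And>\<alpha> x \<xi>. 0 < \<alpha> \<Longrightarrow> \<alpha> \<le> \<alpha>0 \<Longrightarrow> \<xi> \<in> {a..b} \<Longrightarrow> \<bar>v \<alpha> x \<xi> - v \<alpha> x0 \<xi>\<bar> \<le> B"
proof -
  have cont: "\<forall>\<alpha>>0. continuous_on {a..b} (\<lambda>\<xi>. \<alpha> * v \<alpha> x0 \<xi> + Theta a b k (v \<alpha>) x0 \<xi>)"
  proof (intro allI impI)
    fix \<alpha> :: real assume that: "0 < \<alpha>"
    have "continuous_on {a..b} (v \<alpha> x0)"
      using v_sol[OF that] unfolding DP_solution_def by (blast intro: continuous_on_curry_snd)
    then show "continuous_on {a..b} (\<lambda>\<xi>. \<alpha> * v \<alpha> x0 \<xi> + Theta a b k (v \<alpha>) x0 \<xi>)"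
      by (intro continuous_intros continuous_on_Theta[OF k_cont])
  qed
  obtain \<alpha>0 E where \<alpha>0: "0 < \<alpha>0" "\<alpha>0 \<le> 1" and E0: "0 \<le> E"
    and E: "\<And>\<alpha> \<xi>. 0 < \<alpha> \<Longrightarrow> \<alpha> \<le> \<alpha>0 \<Longrightarrow> \<xi> \<in> {a..b} \<Longrightarrow>
      \<bar>\<alpha> * v \<alpha> x0 \<xi> + Theta a b k (v \<alpha>) x0 \<xi>\<bar> \<le> E"
    using uniform_limit_at_right_eventually_bounded[OF ergodic compact_Icc cont] by blast
  define D where "D = real CARD('d)"
  define R where "R = (C2 + E) / C1"
  define S where "S = (1 + 2 * k1) / C1"
  define \<beta> where "\<beta> = 1 / m"
  define T where "T = (2*D*S+1) powr (1/(1-\<beta>))"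
  have k1: "0 \<le> k1" using kb[of a a] I_len by simp
  have nn: "0 \<le> D" "0 \<le> R" "0 \<le> S" unfolding D_def R_def S_def using C1 C2 E0 k1 by auto
  have \<beta>: "0 < \<beta>" "\<beta> < 1" unfolding \<beta>_def using m by auto
  have "\<bar>v \<alpha> x \<xi> - v \<alpha> x0 \<xi>\<bar> \<le> 2 * (D + D * T powr \<beta> + D * T powr (\<beta> - 1) * R)"
    if \<alpha>: "0 < \<alpha>" "\<alpha> \<le> \<alpha>0" and \<xi>: "\<xi> \<in> {a..b}" for \<alpha> x \<xi>
  proof (rule DP_solution_osc_estimate[OF I_len C1 m B1 k_cont kb v_sol[OF \<alpha>(1)]])
    show "0 \<le> \<alpha>" "\<alpha> \<le> 1" using \<alpha> \<alpha>0 by auto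
    show "\<And>\<xi>. \<xi> \<in> {a..b} \<Longrightarrow> \<bar>\<alpha> * v \<alpha> x0 \<xi> + Theta a b k (v \<alpha>) x0 \<xi>\<bar> \<le> E" by (rule E[OF \<alpha>])
    fix Om assume Om0: "0 \<le> Om" and Om_le: "Om \<le> real CARD('d) + real CARD('d) *
        ((C2 + E) / C1 + ((1 + 2 * k1) / C1) * Om) powr (1/m)"
      and Om: "\<And>x \<xi>. \<xi> \<in> {a..b} \<Longrightarrow> \<bar>v \<alpha> x \<xi> - v \<alpha> x0 \<xi>\<bar> \<le> Om"
    have "Om \<le> D + D * (R + S * Om) powr \<beta>" using Om_le unfolding D_def R_def S_def \<beta>_def .
    then have "Om \<le> 2 * (D + D * T powr \<beta> + D * T powr (\<beta> - 1) * R)"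
      unfolding T_def by (rule le_of_le_sublinear[OF nn(1,1,2,3) \<beta> Om0])
    then show ?thesis using Om[OF \<xi>, of x] by linarith
  qed
  with \<alpha>0(1) that show ?thesis by blast
qed

section \<open>Half-relaxed limits\<close>

lemma tendsto_INF_at_right_0:
  fixes f :: "real \<Rightarrow> 'a::{complete_linorder, linorder_topology}"
  assumes mono: "\<And>r r'. 0 < r \<Longrightarrow> r \<le> r' \<Longrightarrow> f r \<le> f r'"
  shows "(f \<longlongrightarrow> (INF r\<in>{0<..}. f r)) (at_right 0)"
proof (rule order_tendstoI)
  fix y assume y: "y < (INF r\<in>{0<..}. f r)"
  show "\<forall>\<^sub>F r in at_right 0. y < f r"
    using eventually_at_right_less[of "0::real"]
  proof (rule eventually_mono)
    fix r :: real assume "0 < r"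
    then have "(INF r\<in>{0<..}. f r) \<le> f r" by (intro INF_lower) auto
    then show "y < f r" using y by simp
  qed
next
  fix y assume "(INF r\<in>{0<..}. f r) < y"
  then obtain r0 where r0: "0 < r0" "f r0 < y" by (auto simp: INF_less_iff)
  have "\<forall>\<^sub>F r in at_right 0. 0 < r \<and> r < r0"
    using r0(1) by (auto simp: eventually_at_right_field intro: exI[of _ r0])
  then show "\<forall>\<^sub>F r in at_right 0. f r < y"
  proof (rule eventually_mono)
    fix r assume "0 < r \<and> r < r0"
    then have "f r \<le> f r0" by (intro mono) auto
    then show "f r < y" using r0(2) by (rule le_less_trans)
  qed
qed

lemma relax_set_mono: "r \<le> r' \<Longrightarrow> relax_set a b x \<xi> r \<subseteq> relax_set a b x \<xi> r'"
  unfolding relax_set_def by auto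

text \<open>The hypothesis cannot be dropped: \<open>Lim\<close> is junk when the limit does not exist.\<close>

lemma lower_relax_eq_uminus:
  assumes "((\<lambda>r. SUP (\<alpha>, y, \<eta>) \<in> relax_set a b x \<xi> r. ereal (- v \<alpha> y \<eta> - - v \<alpha> x0 \<eta>)) \<longlongrightarrow> L)
      (at_right 0)"
  shows "lower_relax a b v x0 x \<xi> = - L"
proof -
  have "(\<lambda>r. INF (\<alpha>, y, \<eta>) \<in> relax_set a b x \<xi> r. ereal (v \<alpha> y \<eta> - v \<alpha> x0 \<eta>))
      = (\<lambda>r. - (SUP (\<alpha>, y, \<eta>) \<in> relax_set a b x \<xi> r. ereal (- v \<alpha> y \<eta> - - v \<alpha> x0 \<eta>)))"
  proof
    fix r
    have "(SUP (\<alpha>, y, \<eta>) \<in> relax_set a b x \<xi> r. ereal (- v \<alpha> y \<eta> - - v \<alpha> x0 \<eta>))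
        = (SUP t \<in> relax_set a b x \<xi> r. - (\<lambda>(\<alpha>, y, \<eta>). ereal (v \<alpha> y \<eta> - v \<alpha> x0 \<eta>)) t)"
      by (intro SUP_cong refl) (auto split: prod.splits)
    also have "\<dots> = - (INF t \<in> relax_set a b x \<xi> r. (\<lambda>(\<alpha>, y, \<eta>). ereal (v \<alpha> y \<eta> - v \<alpha> x0 \<eta>)) t)"
      by (rule ereal_SUP_uminus_eq)
    finally have "- (SUP (\<alpha>, y, \<eta>) \<in> relax_set a b x \<xi> r. ereal (- v \<alpha> y \<eta> - - v \<alpha> x0 \<eta>))
        = (INF t \<in> relax_set a b x \<xi> r. (\<lambda>(\<alpha>, y, \<eta>). ereal (v \<alpha> y \<eta> - v \<alpha> x0 \<eta>)) t)"
      by (simp only: ereal_uminus_uminus)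
    then show "(INF (\<alpha>, y, \<eta>) \<in> relax_set a b x \<xi> r. ereal (v \<alpha> y \<eta> - v \<alpha> x0 \<eta>))
        = - (SUP (\<alpha>, y, \<eta>) \<in> relax_set a b x \<xi> r. ereal (- v \<alpha> y \<eta> - - v \<alpha> x0 \<eta>))"
      by (rule sym)
  qed
  moreover have "Lim (at_right (0::real))
      (\<lambda>r. - (SUP (\<alpha>, y, \<eta>) \<in> relax_set a b x \<xi> r. ereal (- v \<alpha> y \<eta> - - v \<alpha> x0 \<eta>))) = - L"
    by (rule tendsto_Lim[OF trivial_limit_at_right_real tendsto_uminus_ereal[OF assms]])
  ultimately show ?thesis unfolding lower_relax_def by simp
qed

text \<open>Only the subsolution half of (DP) enters; supersolutions are handled by the reflection
  \<open>v \<mapsto> -v\<close> (\<open>half_relaxed_setting_reflect\<close>).\<close>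

locale half_relaxed_setting =
  fixes a b :: real
    and H :: "real^'d \<Rightarrow> real^'d \<Rightarrow> real \<Rightarrow> real"
    and k :: "real \<Rightarrow> real \<Rightarrow> real"
    and v :: "real \<Rightarrow> real^'d \<Rightarrow> real \<Rightarrow> real"
    and c :: "real \<Rightarrow> real"
    and x0 :: "real^'d"
    and k1 \<alpha>0 B :: real
  assumes I_len: "b - a = 1"
    and H_cont: "continuous_on (UNIV \<times> UNIV \<times> {a..b}) (\<lambda>(x, p, \<xi>). H x p \<xi>)"
    and k_cont: "continuous_on ({a..b} \<times> {a..b}) (\<lambda>(\<xi>, \<eta>). k \<xi> \<eta>)"
    and k_bounds: "\<And>\<xi> \<eta>. \<xi> \<in> {a..b} \<Longrightarrow> \<eta> \<in> {a..b} \<Longrightarrow> 0 \<le> k \<xi> \<eta> \<and> k \<xi> \<eta> \<le> k1"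
    and v_cont: "\<And>\<alpha>. 0 < \<alpha> \<Longrightarrow> continuous_on (UNIV \<times> {a..b}) (\<lambda>(x, \<xi>). v \<alpha> x \<xi>)"
    and v_sub: "\<And>\<alpha> \<phi> D\<phi> \<xi> xh. 0 < \<alpha> \<Longrightarrow> C1_torus \<phi> D\<phi> \<Longrightarrow> \<xi> \<in> {a..b} \<Longrightarrow>
        loc_max (\<lambda>y. v \<alpha> y \<xi> - \<phi> y) xh \<Longrightarrow>
        \<alpha> * v \<alpha> xh \<xi> + H xh (D\<phi> xh) \<xi> + Theta a b k (v \<alpha>) xh \<xi> \<le> 0"
    and ergodic: "uniform_limit {a..b}
        (\<lambda>\<alpha> \<xi>. \<alpha> * v \<alpha> x0 \<xi> + Theta a b k (v \<alpha>) x0 \<xi>) (\<lambda>\<xi>. - c \<xi>) (at_right 0)"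
    and \<alpha>0: "0 < \<alpha>0"
    and v_bound: "\<And>\<alpha> x \<xi>. 0 < \<alpha> \<Longrightarrow> \<alpha> \<le> \<alpha>0 \<Longrightarrow> \<xi> \<in> {a..b} \<Longrightarrow> \<bar>v \<alpha> x \<xi> - v \<alpha> x0 \<xi>\<bar> \<le> B"
begin

definition vrel :: "real \<Rightarrow> real^'d \<Rightarrow> real \<Rightarrow> real" where
  "vrel \<alpha> y \<eta> = v \<alpha> y \<eta> - v \<alpha> x0 \<eta>"

definition sup_near :: "real^'d \<Rightarrow> real \<Rightarrow> real \<Rightarrow> ereal" where
  "sup_near x \<xi> r = (SUP (\<alpha>, y, \<eta>) \<in> relax_set a b x \<xi> r. ereal (vrel \<alpha> y \<eta>))"

definition vbar :: "real^'d \<Rightarrow> real \<Rightarrow> real" where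
  "vbar x \<xi> = real_of_ereal (upper_relax a b v x0 x \<xi>)"

lemma B_nonneg: "0 \<le> B"
  using v_bound[OF \<alpha>0 order_refl, of a x0] I_len by simp

lemma vrel_bound: "0 < \<alpha> \<Longrightarrow> \<alpha> \<le> \<alpha>0 \<Longrightarrow> \<eta> \<in> {a..b} \<Longrightarrow> \<bar>vrel \<alpha> y \<eta>\<bar> \<le> B"
  unfolding vrel_def by (rule v_bound)

lemma vrel_le_sup_near: "(\<alpha>, y, \<eta>) \<in> relax_set a b x \<xi> r \<Longrightarrow> ereal (vrel \<alpha> y \<eta>) \<le> sup_near x \<xi> r"
  unfolding sup_near_def using SUP_upper[of _ _ "\<lambda>(\<alpha>, y, \<eta>). ereal (vrel \<alpha> y \<eta>)"] by fastforce

lemma sup_near_mono: "r \<le> r' \<Longrightarrow> sup_near x \<xi> r \<le> sup_near x \<xi> r'"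
  unfolding sup_near_def by (rule SUP_subset_mono[OF relax_set_mono]) auto

lemma sup_near_ge: assumes "0 < r" "\<xi> \<in> {a..b}" shows "ereal (- B) \<le> sup_near x \<xi> r"
proof -
  define \<alpha> where "\<alpha> = min r \<alpha>0 / 2"
  have \<alpha>: "0 < \<alpha>" "\<alpha> \<le> \<alpha>0" "\<alpha> \<le> r" using assms \<alpha>0 unfolding \<alpha>_def by auto
  then have "(\<alpha>, x, \<xi>) \<in> relax_set a b x \<xi> r" unfolding relax_set_def using assms by auto
  then have "ereal (vrel \<alpha> x \<xi>) \<le> sup_near x \<xi> r" by (rule vrel_le_sup_near)
  moreover have "- B \<le> vrel \<alpha> x \<xi>" using vrel_bound[OF \<alpha>(1,2) assms(2), of x] by simp
  then have "ereal (- B) \<le> ereal (vrel \<alpha> x \<xi>)" by simp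
  ultimately show ?thesis by (rule order.trans[rotated])
qed

lemma sup_near_le: assumes "0 < r" "r \<le> \<alpha>0" shows "sup_near x \<xi> r \<le> ereal B"
  unfolding sup_near_def
proof (rule SUP_least, clarify)
  fix \<alpha> y \<eta> assume "(\<alpha>, y, \<eta>) \<in> relax_set a b x \<xi> r"
  then have "0 < \<alpha>" "\<eta> \<in> {a..b}" "dist x y + \<bar>\<xi> - \<eta>\<bar> + \<alpha> \<le> r"
    unfolding relax_set_def by auto
  moreover from this have "\<alpha> \<le> \<alpha>0" using assms zero_le_dist[of x y] by linarith
  ultimately have "\<bar>vrel \<alpha> y \<eta>\<bar> \<le> B" by (intro vrel_bound)
  then show "ereal (vrel \<alpha> y \<eta>) \<le> ereal B" by simp
qed

lemma sup_near_tendsto_INF: "(sup_near x \<xi> \<longlongrightarrow> (INF r\<in>{0<..}. sup_near x \<xi> r)) (at_right 0)"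
  by (rule tendsto_INF_at_right_0) (rule sup_near_mono)

lemma upper_relax_eq_vbar:
  assumes "\<xi> \<in> {a..b}"
  shows "upper_relax a b v x0 x \<xi> = ereal (vbar x \<xi>)" "\<bar>vbar x \<xi>\<bar> \<le> B"
    "(INF r\<in>{0<..}. sup_near x \<xi> r) = ereal (vbar x \<xi>)"
proof -
  let ?I = "(INF r\<in>{0<..}. sup_near x \<xi> r)"
  have "upper_relax a b v x0 x \<xi> = Lim (at_right (0::real)) (sup_near x \<xi>)"
    unfolding upper_relax_def sup_near_def vrel_def by simp
  then have eq: "upper_relax a b v x0 x \<xi> = ?I"
    using tendsto_Lim[OF trivial_limit_at_right_real sup_near_tendsto_INF] by simp
  have "ereal (- B) \<le> ?I" by (rule INF_greatest) (use sup_near_ge assms in auto)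
  moreover have "?I \<le> ereal B"
    using INF_lower[of \<alpha>0 "{0<..}" "sup_near x \<xi>"] sup_near_le[OF \<alpha>0 order_refl, of x \<xi>] \<alpha>0
    by simp
  ultimately obtain r where "?I = ereal r" "\<bar>r\<bar> \<le> B" by (cases ?I) auto
  then show "upper_relax a b v x0 x \<xi> = ereal (vbar x \<xi>)" "\<bar>vbar x \<xi>\<bar> \<le> B" "?I = ereal (vbar x \<xi>)"
    using eq unfolding vbar_def by auto
qed

lemma sup_near_tendsto_vbar:
  "\<xi> \<in> {a..b} \<Longrightarrow> (sup_near x \<xi> \<longlongrightarrow> ereal (vbar x \<xi>)) (at_right 0)"
  using sup_near_tendsto_INF[of x \<xi>] upper_relax_eq_vbar(3)[of \<xi> x] by simp

lemma vrel_le_vbar_near: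
  assumes "\<xi> \<in> {a..b}" "0 < \<epsilon>"
  obtains r where "0 < r"
    "\<And>\<alpha> y \<eta>. (\<alpha>, y, \<eta>) \<in> relax_set a b x \<xi> r \<Longrightarrow> vrel \<alpha> y \<eta> \<le> vbar x \<xi> + \<epsilon>"
proof -
  have "(INF r\<in>{0<..}. sup_near x \<xi> r) < ereal (vbar x \<xi> + \<epsilon>)"
    using upper_relax_eq_vbar(3)[OF assms(1)] assms(2) by simp
  then obtain r where r: "0 < r" "sup_near x \<xi> r < ereal (vbar x \<xi> + \<epsilon>)"
    by (auto simp: INF_less_iff)
  have "vrel \<alpha> y \<eta> \<le> vbar x \<xi> + \<epsilon>" if "(\<alpha>, y, \<eta>) \<in> relax_set a b x \<xi> r" for \<alpha> y \<eta>
    using le_less_trans[OF vrel_le_sup_near[OF that] r(2)] by simp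
  then show ?thesis using that[OF r(1)] by blast
qed

lemma vbar_approx_from_below:
  assumes "\<xi> \<in> {a..b}" "0 < \<epsilon>" "0 < r"
  obtains \<alpha> y \<eta> where "(\<alpha>, y, \<eta>) \<in> relax_set a b x \<xi> r" "vbar x \<xi> - \<epsilon> < vrel \<alpha> y \<eta>"
proof -
  have "ereal (vbar x \<xi>) \<le> sup_near x \<xi> r"
    using upper_relax_eq_vbar(3)[OF assms(1), of x] assms(3) by (metis INF_lower greaterThan_iff)
  moreover have "ereal (vbar x \<xi> - \<epsilon>) < ereal (vbar x \<xi>)" using assms(2) by simp
  ultimately have "ereal (vbar x \<xi> - \<epsilon>) < sup_near x \<xi> r" by (rule order.strict_trans2[rotated])
  then obtain t where "t \<in> relax_set a b x \<xi> r"
    "ereal (vbar x \<xi> - \<epsilon>) < (\<lambda>(\<alpha>, y, \<eta>). ereal (vrel \<alpha> y \<eta>)) t"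
    unfolding sup_near_def by (auto simp: less_SUP_iff)
  then show ?thesis using that by (cases t) auto
qed

lemma vbar_usc:
  assumes "\<xi> \<in> {a..b}" "0 < \<epsilon>"
  obtains \<delta> where "0 < \<delta>"
    "\<And>y \<eta>. \<eta> \<in> {a..b} \<Longrightarrow> dist x y + \<bar>\<xi> - \<eta>\<bar> < \<delta> \<Longrightarrow> vbar y \<eta> \<le> vbar x \<xi> + \<epsilon>"
proof -
  obtain r where r: "0 < r"
    "\<And>\<alpha> y \<eta>. (\<alpha>, y, \<eta>) \<in> relax_set a b x \<xi> r \<Longrightarrow> vrel \<alpha> y \<eta> \<le> vbar x \<xi> + \<epsilon>"
    using vrel_le_vbar_near[OF assms] by blast
  have "vbar y \<eta> \<le> vbar x \<xi> + \<epsilon>" if \<eta>: "\<eta> \<in> {a..b}" and d: "dist x y + \<bar>\<xi> - \<eta>\<bar> < r/2" for y \<eta>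
  proof (rule ccontr)
    assume "\<not> ?thesis"
    then have "0 < vbar y \<eta> - vbar x \<xi> - \<epsilon>" by simp
    then obtain \<alpha> y' \<eta>' where m: "(\<alpha>, y', \<eta>') \<in> relax_set a b y \<eta> (r/2)"
      and "vbar y \<eta> - (vbar y \<eta> - vbar x \<xi> - \<epsilon>) < vrel \<alpha> y' \<eta>'"
      using vbar_approx_from_below[OF \<eta> _ half_gt_zero[OF r(1)], of _ y] by blast
    then have gt: "vbar x \<xi> + \<epsilon> < vrel \<alpha> y' \<eta>'" by simp
    have "dist x y' \<le> dist x y + dist y y'" by (rule dist_triangle)
    moreover have "\<bar>\<xi> - \<eta>'\<bar> \<le> \<bar>\<xi> - \<eta>\<bar> + \<bar>\<eta> - \<eta>'\<bar>" by simp
    ultimately have "(\<alpha>, y', \<eta>') \<in> relax_set a b x \<xi> r" using m d unfolding relax_set_def by auto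
    then show False using r(2) gt by (meson not_le)
  qed
  then show ?thesis using that[of "r/2"] r(1) by simp
qed

lemma vbar_measurable: "(\<lambda>\<eta>. vbar x \<eta>) \<in> borel_measurable (lebesgue_on {a..b})"
proof -
  have "{\<eta> \<in> {a..b}. vbar x \<eta> < t} \<in> sets lebesgue" for t
  proof -
    define A where "A = {\<eta> \<in> {a..b}. vbar x \<eta> < t}"
    have "\<forall>\<eta>\<in>A. \<exists>d>0. \<forall>\<eta>'\<in>{a..b}. \<bar>\<eta> - \<eta>'\<bar> < d \<longrightarrow> \<eta>' \<in> A"
    proof
      fix \<eta> assume "\<eta> \<in> A"
      then have \<eta>: "\<eta> \<in> {a..b}" "0 < (t - vbar x \<eta>) / 2" unfolding A_def by auto
      obtain d where d: "0 < d"
        "\<And>\<eta>'. \<eta>' \<in> {a..b} \<Longrightarrow> \<bar>\<eta> - \<eta>'\<bar> < d \<Longrightarrow> vbar x \<eta>' \<le> vbar x \<eta> + (t - vbar x \<eta>) / 2"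
        using vbar_usc[OF \<eta>, of x] by (metis add_0 dist_self)
      have "vbar x \<eta>' < t" if "\<eta>' \<in> {a..b}" "\<bar>\<eta> - \<eta>'\<bar> < d" for \<eta>'
      proof -
        have "vbar x \<eta>' \<le> vbar x \<eta> + (t - vbar x \<eta>) / 2" by (rule d(2)[OF that])
        also have "\<dots> < t" using \<eta>(2) by (simp add: field_simps)
        finally show ?thesis .
      qed
      then show "\<exists>d>0. \<forall>\<eta>'\<in>{a..b}. \<bar>\<eta> - \<eta>'\<bar> < d \<longrightarrow> \<eta>' \<in> A"
        using d(1) unfolding A_def by blast
    qed
    then obtain d where d: "\<And>\<eta>. \<eta> \<in> A \<Longrightarrow> 0 < d \<eta>"
      "\<And>\<eta> \<eta>'. \<eta> \<in> A \<Longrightarrow> \<eta>' \<in> {a..b} \<Longrightarrow> \<bar>\<eta> - \<eta>'\<bar> < d \<eta> \<Longrightarrow> \<eta>' \<in> A"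
      by metis
    have "A = {a..b} \<inter> (\<Union>\<eta>\<in>A. ball \<eta> (d \<eta>))"
      using d by (auto simp: A_def dist_real_def)
    moreover have "(\<Union>\<eta>\<in>A. ball \<eta> (d \<eta>)) \<in> sets lebesgue"
      by (metis borel_open open_UN open_ball sets_completionI_sets sets_lborel)
    moreover have "{a..b} \<in> sets lebesgue"
      by (metis borel_closed closed_atLeastAtMost sets_completionI_sets sets_lborel)
    ultimately have "A \<in> sets lebesgue" by (metis sets.Int)
    then show ?thesis unfolding A_def .
  qed
  then show ?thesis
    by (auto simp: borel_measurable_iff_less sets_restrict_space_iff)
qed

text \<open>Upper semicontinuity of \<open>vbar\<close> and continuity of \<open>\<Phi>\<close> give the bound near each point
  of \<open>K\<close>; a finite subcover makes it uniform.\<close>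

lemma vrel_below_on_compact:
  assumes K: "compact K" and \<xi>: "\<xi> \<in> {a..b}" and \<Phi>: "continuous_on UNIV \<Phi>"
    and below: "\<And>z. z \<in> K \<Longrightarrow> vbar z \<xi> - \<Phi> z < T"
  obtains \<rho> \<gamma> where "0 < \<rho>" "0 < \<gamma>"
    "\<And>\<alpha> y \<eta>. 0 < \<alpha> \<Longrightarrow> \<alpha> \<le> \<rho> \<Longrightarrow> \<eta> \<in> {a..b} \<Longrightarrow> \<bar>\<xi> - \<eta>\<bar> \<le> \<rho> \<Longrightarrow> y \<in> K \<Longrightarrow>
       vrel \<alpha> y \<eta> - \<Phi> y \<le> T - \<gamma>"
proof (cases "K = {}")
  case True
  then show ?thesis using that[of 1 1] by auto
next
  case False
  define e where "e z = (T - (vbar z \<xi> - \<Phi> z)) / 3" for z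
  have e0: "0 < e z" if "z \<in> K" for z unfolding e_def using below[OF that] by simp
  have "\<exists>r s. 0 < r \<and> 0 < s \<and> s \<le> r / 3 \<and>
     (\<forall>\<alpha> y \<eta>. (\<alpha>, y, \<eta>) \<in> relax_set a b z \<xi> r \<longrightarrow> vrel \<alpha> y \<eta> \<le> vbar z \<xi> + e z) \<and>
     (\<forall>y. dist y z < s \<longrightarrow> \<bar>\<Phi> y - \<Phi> z\<bar> < e z)" if z: "z \<in> K" for z
  proof -
    obtain r where r: "0 < r"
      "\<And>\<alpha> y \<eta>. (\<alpha>, y, \<eta>) \<in> relax_set a b z \<xi> r \<Longrightarrow> vrel \<alpha> y \<eta> \<le> vbar z \<xi> + e z"
      using vrel_le_vbar_near[OF \<xi> e0[OF z]] by blast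
    obtain d where d: "0 < d" "\<And>y. dist y z < d \<Longrightarrow> dist (\<Phi> y) (\<Phi> z) < e z"
      using \<Phi> e0[OF z] unfolding continuous_on_eq_continuous_at[OF open_UNIV] continuous_at_eps_delta
      by blast
    show ?thesis
      using r d by (intro exI[of _ r] exI[of _ "min (r/3) d"]) (auto simp: dist_real_def)
  qed
  then obtain r s where rs: "\<And>z. z \<in> K \<Longrightarrow> 0 < r z \<and> 0 < s z \<and> s z \<le> r z / 3 \<and>
     (\<forall>\<alpha> y \<eta>. (\<alpha>, y, \<eta>) \<in> relax_set a b z \<xi> (r z) \<longrightarrow> vrel \<alpha> y \<eta> \<le> vbar z \<xi> + e z) \<and>
     (\<forall>y. dist y z < s z \<longrightarrow> \<bar>\<Phi> y - \<Phi> z\<bar> < e z)"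
    by metis
  have cover: "K \<subseteq> (\<Union>z\<in>K. ball z (s z))" using rs by force
  obtain C where C: "C \<subseteq> K" "finite C" "K \<subseteq> (\<Union>z\<in>C. ball z (s z))"
    using compactE_image[OF K _ cover] by blast
  have Cne: "C \<noteq> {}" using C(3) False by auto
  define \<rho> where "\<rho> = Min ((\<lambda>z. r z / 3) ` C)"
  define \<gamma> where "\<gamma> = Min (e ` C)"
  have \<rho>0: "0 < \<rho>" unfolding \<rho>_def using C Cne rs by (subst Min_gr_iff) auto
  have \<gamma>0: "0 < \<gamma>" unfolding \<gamma>_def using C Cne e0 by (subst Min_gr_iff) auto
  have "vrel \<alpha> y \<eta> - \<Phi> y \<le> T - \<gamma>"
    if h: "0 < \<alpha>" "\<alpha> \<le> \<rho>" "\<eta> \<in> {a..b}" "\<bar>\<xi> - \<eta>\<bar> \<le> \<rho>" "y \<in> K" for \<alpha> y \<eta>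
  proof -
    obtain z where z: "z \<in> C" "dist z y < s z" using C(3) h(5) by auto
    note E = rs[OF subsetD[OF C(1) z(1)]]
    have "\<rho> \<le> r z / 3" unfolding \<rho>_def using z(1) C(2) by (intro Min_le) auto
    then have "(\<alpha>, y, \<eta>) \<in> relax_set a b z \<xi> (r z)"
      using z(2) E h unfolding relax_set_def by auto
    then have "vrel \<alpha> y \<eta> \<le> vbar z \<xi> + e z" using E by blast
    moreover have "\<bar>\<Phi> y - \<Phi> z\<bar> < e z" using E z(2) by (simp add: dist_commute)
    moreover have "\<gamma> \<le> e z" unfolding \<gamma>_def using z(1) C(2) by simp
    moreover have "3 * e z = T - (vbar z \<xi> - \<Phi> z)" by (simp add: e_def)
    ultimately show ?thesis unfolding abs_less_iff by linarith
  qed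
  with \<rho>0 \<gamma>0 that show ?thesis by blast
qed

lemma k_slice_cont: "\<xi> \<in> {a..b} \<Longrightarrow> continuous_on {a..b} (k \<xi>)"
  by (rule continuous_on_curry_snd[OF k_cont])

lemma v_slice_cont: "0 < \<alpha> \<Longrightarrow> continuous_on {a..b} (v \<alpha> x)"
  using continuous_on_curry_snd[OF v_cont, of \<alpha> x] by simp

lemma vrel_slice_cont: "0 < \<alpha> \<Longrightarrow> continuous_on {a..b} (vrel \<alpha> y)"
  unfolding vrel_def[abs_def] by (intro continuous_on_diff v_slice_cont)

lemma c_cont: "continuous_on {a..b} c"
proof -
  have "\<forall>\<^sub>F \<alpha> in at_right 0. continuous_on {a..b} (\<lambda>\<xi>. \<alpha> * v \<alpha> x0 \<xi> + Theta a b k (v \<alpha>) x0 \<xi>)"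
    using eventually_at_right_less[of "0::real"]
    by (rule eventually_mono) (intro continuous_intros continuous_on_Theta[OF k_cont] v_slice_cont)
  from continuous_on_minus[OF uniform_limit_theorem[OF this ergodic trivial_limit_at_right_real]]
  show ?thesis by simp
qed

lemma k_mass_cont: "continuous_on {a..b} (\<lambda>\<xi>. integral {a..b} (k \<xi>))"
  using integral_continuous_on_param[of "{a..b}" a b "\<lambda>\<xi> \<eta>. k \<xi> \<eta>"] k_cont by simp

lemma k_uniformly_cont:
  assumes "0 < \<epsilon>"
  obtains \<delta> where "0 < \<delta>" "\<And>s t \<eta>. s \<in> {a..b} \<Longrightarrow> t \<in> {a..b} \<Longrightarrow> \<eta> \<in> {a..b} \<Longrightarrow>
    \<bar>s - t\<bar> < \<delta> \<Longrightarrow> \<bar>k s \<eta> - k t \<eta>\<bar> < \<epsilon>"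
proof -
  have "uniformly_continuous_on ({a..b} \<times> {a..b}) (\<lambda>(\<xi>, \<eta>). k \<xi> \<eta>)"
    by (rule compact_uniformly_continuous[OF k_cont]) (auto intro: compact_Times)
  then obtain \<delta> where "0 < \<delta>" "\<And>p q. p \<in> {a..b} \<times> {a..b} \<Longrightarrow> q \<in> {a..b} \<times> {a..b} \<Longrightarrow>
      dist q p < \<delta> \<Longrightarrow> dist ((\<lambda>(\<xi>, \<eta>). k \<xi> \<eta>) q) ((\<lambda>(\<xi>, \<eta>). k \<xi> \<eta>) p) < \<epsilon>"
    using assms unfolding uniformly_continuous_on_def by metis
  with that show ?thesis by (force simp: dist_Pair_Pair dist_real_def)
qed

end

section \<open>Passing to the limit at a touching point\<close>

text \<open>Adding the bump \<open>torus_quad xh 0 1\<close> to \<open>\<phi>\<close> makes the maximum of \<open>vbar - \<phi>\<close> at \<open>xh\<close>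
  strict. Along points \<open>(\<alpha>\<^sub>n, y\<^sub>n, \<eta>\<^sub>n)\<close> realising \<open>vbar(xh, \<xi>)\<close>, the maximisers \<open>z\<^sub>n\<close> of
  \<open>vrel - \<Phi>\<close> near \<open>xh\<close> then converge to \<open>xh\<close> with \<open>vrel(\<alpha>\<^sub>n, z\<^sub>n, \<eta>\<^sub>n) \<rightarrow> vbar(xh, \<xi>)\<close>. The
  subsolution inequality at \<open>z\<^sub>n\<close> passes to the limit; for the nonlocal term, \<open>kmax\<close> is a
  dominated majorant converging to \<open>k(\<xi>, \<cdot>) vbar(xh, \<cdot>)\<close> by upper semicontinuity.\<close>

locale touching_point = half_relaxed_setting a b H k v c x0 k1 \<alpha>0 B
  for a b :: real
    and H :: "real^'d \<Rightarrow> real^'d \<Rightarrow> real \<Rightarrow> real"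
    and k :: "real \<Rightarrow> real \<Rightarrow> real"
    and v :: "real \<Rightarrow> real^'d \<Rightarrow> real \<Rightarrow> real"
    and c :: "real \<Rightarrow> real"
    and x0 :: "real^'d"
    and k1 \<alpha>0 B :: real +
  fixes \<phi> :: "real^'d \<Rightarrow> real" and D\<phi> :: "real^'d \<Rightarrow> real^'d" and \<xi> :: real and xh :: "real^'d"
    and e :: real
  assumes test_fn: "C1_torus \<phi> D\<phi>" and \<xi>: "\<xi> \<in> {a..b}"
    and e: "0 < e" and touch: "\<And>y. dist y xh < e \<Longrightarrow> vbar y \<xi> - \<phi> y \<le> vbar xh \<xi> - \<phi> xh"
begin

definition rr :: "nat \<Rightarrow> real" where
  "rr n = \<alpha>0 / real (Suc n)"

definition near_pt :: "nat \<Rightarrow> real \<times> (real^'d) \<times> real" where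
  "near_pt n = (SOME t. t \<in> relax_set a b xh \<xi> (rr n) \<and> vbar xh \<xi> - rr n < (\<lambda>(\<alpha>, y, \<eta>). vrel \<alpha> y \<eta>) t)"

definition "\<alpha>s n = fst (near_pt n)"
definition "ys n = fst (snd (near_pt n))"
definition "\<eta>s n = snd (snd (near_pt n))"

lemma rr_pos: "0 < rr n"
  unfolding rr_def using \<alpha>0 by simp

lemma rr_lim: "rr \<longlonglongrightarrow> 0"
  unfolding rr_def using LIMSEQ_Suc[OF lim_const_over_n[of \<alpha>0]] by simp

lemma rr_eventually_less: "0 < r \<Longrightarrow> \<forall>\<^sub>F n in sequentially. rr n < r"
  using order_tendstoD(2)[OF rr_lim] by simp

lemma near_pt:
  "(\<alpha>s n, ys n, \<eta>s n) \<in> relax_set a b xh \<xi> (rr n)" "vbar xh \<xi> - rr n < vrel (\<alpha>s n) (ys n) (\<eta>s n)"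
proof -
  obtain \<alpha> y \<eta> where "(\<alpha>, y, \<eta>) \<in> relax_set a b xh \<xi> (rr n)" "vbar xh \<xi> - rr n < vrel \<alpha> y \<eta>"
    using vbar_approx_from_below[OF \<xi> rr_pos rr_pos] by blast
  then have "\<exists>t. t \<in> relax_set a b xh \<xi> (rr n) \<and> vbar xh \<xi> - rr n < (\<lambda>(\<alpha>, y, \<eta>). vrel \<alpha> y \<eta>) t"
    by auto
  from someI_ex[OF this]
  show "(\<alpha>s n, ys n, \<eta>s n) \<in> relax_set a b xh \<xi> (rr n)" "vbar xh \<xi> - rr n < vrel (\<alpha>s n) (ys n) (\<eta>s n)"
    unfolding \<alpha>s_def ys_def \<eta>s_def near_pt_def[symmetric] by (auto split: prod.splits)
qed

lemma \<alpha>s_pos: "0 < \<alpha>s n" and \<eta>s_mem: "\<eta>s n \<in> {a..b}"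
  and near_dist: "dist xh (ys n) + \<bar>\<xi> - \<eta>s n\<bar> + \<alpha>s n \<le> rr n"
  using near_pt(1)[of n] unfolding relax_set_def by auto

lemma \<alpha>s_le: "\<alpha>s n \<le> rr n" and ys_near: "dist xh (ys n) \<le> rr n" and \<eta>s_near: "\<bar>\<xi> - \<eta>s n\<bar> \<le> rr n"
  using near_dist[of n] \<alpha>s_pos[of n] zero_le_dist[of xh "ys n"] abs_ge_zero[of "\<xi> - \<eta>s n"]
  by linarith+

lemma \<alpha>s_le_\<alpha>0: "\<alpha>s n \<le> \<alpha>0"
  using \<alpha>s_le[of n] \<alpha>0 unfolding rr_def by (simp add: divide_le_eq order.trans)

lemma \<alpha>s_lim: "\<alpha>s \<longlonglongrightarrow> 0"
  by (rule Lim_null_comparison[OF _ rr_lim])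
    (use \<alpha>s_pos \<alpha>s_le in \<open>auto intro!: always_eventually simp: less_imp_le\<close>)

lemma \<alpha>s_at_right: "filterlim \<alpha>s (at_right 0) sequentially"
  by (rule tendsto_imp_filterlim_at_right[OF \<alpha>s_lim]) (use \<alpha>s_pos in \<open>auto intro!: always_eventually\<close>)

lemma ys_lim: "ys \<longlonglongrightarrow> xh"
proof -
  have "(\<lambda>n. ys n - xh) \<longlonglongrightarrow> 0"
    by (rule Lim_null_comparison[OF _ rr_lim])
      (use ys_near in \<open>auto intro!: always_eventually simp: dist_norm norm_minus_commute\<close>)
  then show ?thesis by (simp add: LIM_zero_iff)
qed

lemma \<eta>s_lim: "\<eta>s \<longlonglongrightarrow> \<xi>"
proof -
  have "(\<lambda>n. \<eta>s n - \<xi>) \<longlonglongrightarrow> 0"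
    by (rule Lim_null_comparison[OF _ rr_lim])
      (use \<eta>s_near in \<open>auto intro!: always_eventually simp: abs_minus_commute\<close>)
  then show ?thesis by (simp add: LIM_zero_iff)
qed

lemma vrel_\<alpha>s_bound: "\<eta> \<in> {a..b} \<Longrightarrow> \<bar>vrel (\<alpha>s n) y \<eta>\<bar> \<le> B"
  by (rule vrel_bound[OF \<alpha>s_pos \<alpha>s_le_\<alpha>0])

definition "\<delta> = min (e/2) (1/4)"
definition "\<Phi> y = \<phi> y + torus_quad xh 0 1 y"
definition "D\<Phi> y = D\<phi> y + torus_quad_grad xh 0 1 y"
definition "gap n y = vrel (\<alpha>s n) y (\<eta>s n) - \<Phi> y"
definition "zs n = (SOME z. z \<in> cball xh \<delta> \<and> (\<forall>y\<in>cball xh \<delta>. gap n y \<le> gap n z))"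

lemma \<delta>: "0 < \<delta>" "\<delta> < e" "\<delta> \<le> 1/4"
  unfolding \<delta>_def using e by auto

lemma C1_torus_\<Phi>: "C1_torus \<Phi> D\<Phi>"
  unfolding \<Phi>_def[abs_def] D\<Phi>_def[abs_def] by (rule C1_torus_add[OF test_fn C1_torus_torus_quad])

lemma \<Phi>_cont: "continuous_on UNIV \<Phi>"
  by (rule C1_torus_continuous_on[OF C1_torus_\<Phi>])

lemma \<Phi>_xh [simp]: "\<Phi> xh = \<phi> xh" and D\<Phi>_xh [simp]: "D\<Phi> xh = D\<phi> xh"
  unfolding \<Phi>_def D\<Phi>_def by simp_all

lemma \<Phi>_tendsto: "f \<longlonglongrightarrow> xh \<Longrightarrow> (\<lambda>n. \<Phi> (f n)) \<longlonglongrightarrow> \<phi> xh"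
  using isCont_tendsto_compose[of xh \<Phi> f sequentially] \<Phi>_cont
  by (simp add: continuous_on_eq_continuous_at)

lemma zs_max: "zs n \<in> cball xh \<delta>" "\<And>y. y \<in> cball xh \<delta> \<Longrightarrow> gap n y \<le> gap n (zs n)"
proof -
  have "continuous_on UNIV (\<lambda>y. v (\<alpha>s n) y (\<eta>s n))"
    by (rule continuous_on_curry_fst[OF v_cont[OF \<alpha>s_pos] \<eta>s_mem])
  then have "continuous_on (cball xh \<delta>) (gap n)"
    unfolding gap_def[abs_def] vrel_def
    by (intro continuous_intros continuous_on_subset[OF \<Phi>_cont]) (auto intro: continuous_on_subset)
  then have "\<exists>z. z \<in> cball xh \<delta> \<and> (\<forall>y\<in>cball xh \<delta>. gap n y \<le> gap n z)"
    using continuous_attains_sup[of "cball xh \<delta>"] \<delta>(1) by fastforce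
  from someI_ex[OF this] show "zs n \<in> cball xh \<delta>" "\<And>y. y \<in> cball xh \<delta> \<Longrightarrow> gap n y \<le> gap n (zs n)"
    unfolding zs_def by blast+
qed

lemma zs_lim: "zs \<longlonglongrightarrow> xh"
proof (rule tendstoI)
  fix \<epsilon> :: real assume \<epsilon>: "0 < \<epsilon>"
  define \<epsilon>' where "\<epsilon>' = min \<epsilon> \<delta>"
  have \<epsilon>': "0 < \<epsilon>'" using \<epsilon> \<delta> unfolding \<epsilon>'_def by simp
  define K where "K = cball xh \<delta> - ball xh \<epsilon>'"
  have "compact K" unfolding K_def by (intro compact_diff) auto
  moreover have "vbar z \<xi> - \<Phi> z < vbar xh \<xi> - \<phi> xh" if z: "z \<in> K" for z
  proof -
    have d: "dist xh z \<le> \<delta>" "\<epsilon>' \<le> dist xh z" using z unfolding K_def by auto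
    have "vbar z \<xi> - \<phi> z \<le> vbar xh \<xi> - \<phi> xh" using touch[of z] d \<delta> by (simp add: dist_commute)
    moreover have "0 < torus_quad xh 0 1 z"
      by (rule torus_quad_pos) (use d \<epsilon>' \<delta> in \<open>auto simp: dist_commute\<close>)
    ultimately show ?thesis unfolding \<Phi>_def by simp
  qed
  ultimately obtain \<rho> \<gamma> where \<rho>\<gamma>: "0 < \<rho>" "0 < \<gamma>"
    "\<And>\<alpha> y \<eta>. 0 < \<alpha> \<Longrightarrow> \<alpha> \<le> \<rho> \<Longrightarrow> \<eta> \<in> {a..b} \<Longrightarrow> \<bar>\<xi> - \<eta>\<bar> \<le> \<rho> \<Longrightarrow> y \<in> K \<Longrightarrow>
       vrel \<alpha> y \<eta> - \<Phi> y \<le> (vbar xh \<xi> - \<phi> xh) - \<gamma>"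
    using vrel_below_on_compact[OF _ \<xi> \<Phi>_cont] by blast
  have "\<forall>\<^sub>F n in sequentially. rr n < min \<rho> (min \<delta> (\<gamma>/2))"
    by (rule rr_eventually_less) (use \<rho>\<gamma> \<delta> in simp)
  moreover have "\<forall>\<^sub>F n in sequentially. dist (\<Phi> (ys n)) (\<phi> xh) < \<gamma>/2"
    using \<Phi>_tendsto[OF ys_lim] half_gt_zero[OF \<rho>\<gamma>(2)] unfolding tendsto_iff by blast
  ultimately show "\<forall>\<^sub>F n in sequentially. dist (zs n) xh < \<epsilon>"
  proof eventually_elim
    case (elim n)
    have "ys n \<in> cball xh \<delta>" using ys_near[of n] elim by auto
    then have "gap n (ys n) \<le> gap n (zs n)" by (rule zs_max(2))
    moreover have "(vbar xh \<xi> - \<phi> xh) - \<gamma> < gap n (ys n)"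
      using near_pt(2)[of n] elim unfolding gap_def dist_real_def abs_less_iff by linarith
    ultimately have big: "(vbar xh \<xi> - \<phi> xh) - \<gamma> < gap n (zs n)" by linarith
    have "zs n \<notin> K"
    proof
      assume "zs n \<in> K"
      then have "gap n (zs n) \<le> (vbar xh \<xi> - \<phi> xh) - \<gamma>"
        unfolding gap_def using \<rho>\<gamma>(3)[OF \<alpha>s_pos _ \<eta>s_mem] \<alpha>s_le[of n] \<eta>s_near[of n] elim by simp
      then show False using big by simp
    qed
    then show "dist (zs n) xh < \<epsilon>"
      using zs_max(1)[of n] unfolding K_def \<epsilon>'_def by (auto simp: dist_commute)
  qed
qed

lemma zs_eventually_near: "0 < r \<Longrightarrow> \<forall>\<^sub>F n in sequentially. dist (zs n) xh < r"
  using zs_lim by (simp add: tendsto_iff)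

definition "vz n = vrel (\<alpha>s n) (zs n) (\<eta>s n)"

lemma vz_lim: "vz \<longlonglongrightarrow> vbar xh \<xi>"
proof (rule tendstoI)
  fix \<epsilon> :: real assume \<epsilon>: "0 < \<epsilon>"
  obtain r where r: "0 < r"
    "\<And>\<alpha> y \<eta>. (\<alpha>, y, \<eta>) \<in> relax_set a b xh \<xi> r \<Longrightarrow> vrel \<alpha> y \<eta> \<le> vbar xh \<xi> + \<epsilon>/2"
    using vrel_le_vbar_near[OF \<xi>, of "\<epsilon>/2" xh] \<epsilon> by auto
  have "\<forall>\<^sub>F n in sequentially. dist (zs n) xh < r/2" by (rule zs_eventually_near) (use r in simp)
  moreover have "\<forall>\<^sub>F n in sequentially. rr n < min (r/4) (min \<delta> (\<epsilon>/4))"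
    by (rule rr_eventually_less) (use r \<delta> \<epsilon> in simp)
  moreover have "\<forall>\<^sub>F n in sequentially. dist (\<Phi> (ys n)) (\<phi> xh) < \<epsilon>/4"
    using \<Phi>_tendsto[OF ys_lim] \<epsilon> unfolding tendsto_iff by (meson zero_less_divide_iff zero_less_numeral)
  moreover have "\<forall>\<^sub>F n in sequentially. dist (\<Phi> (zs n)) (\<phi> xh) < \<epsilon>/4"
    using \<Phi>_tendsto[OF zs_lim] \<epsilon> unfolding tendsto_iff by (meson zero_less_divide_iff zero_less_numeral)
  ultimately show "\<forall>\<^sub>F n in sequentially. dist (vz n) (vbar xh \<xi>) < \<epsilon>"
  proof eventually_elim
    case (elim n)
    have "dist xh (zs n) + \<bar>\<xi> - \<eta>s n\<bar> + \<alpha>s n \<le> r"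
      using elim \<eta>s_near[of n] \<alpha>s_le[of n] by (simp add: dist_commute)
    then have "(\<alpha>s n, zs n, \<eta>s n) \<in> relax_set a b xh \<xi> r"
      unfolding relax_set_def using \<alpha>s_pos \<eta>s_mem by auto
    then have up: "vz n \<le> vbar xh \<xi> + \<epsilon>/2" unfolding vz_def by (rule r(2))
    have "ys n \<in> cball xh \<delta>" using ys_near[of n] elim by auto
    then have "gap n (ys n) \<le> gap n (zs n)" by (rule zs_max(2))
    then have "vbar xh \<xi> - \<epsilon> < vz n"
      using near_pt(2)[of n] elim unfolding gap_def vz_def dist_real_def abs_less_iff by linarith
    then show "dist (vz n) (vbar xh \<xi>) < \<epsilon>" using up \<epsilon> by (simp add: dist_real_def abs_less_iff)
  qed
qed

lemma zs_touching: "\<forall>\<^sub>F n in sequentially. loc_max (\<lambda>y. v (\<alpha>s n) y (\<eta>s n) - \<Phi> y) (zs n)"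
  using zs_eventually_near[OF half_gt_zero[OF \<delta>(1)]]
proof (rule eventually_mono)
  fix n assume d: "dist (zs n) xh < \<delta>/2"
  show "loc_max (\<lambda>y. v (\<alpha>s n) y (\<eta>s n) - \<Phi> y) (zs n)"
    unfolding loc_max_def
  proof (intro exI[of _ "\<delta>/2"] conjI allI impI)
    show "0 < \<delta>/2" using \<delta> by simp
    fix y assume "dist y (zs n) < \<delta>/2"
    then have "y \<in> cball xh \<delta>" using d dist_triangle[of y xh "zs n"] by (simp add: dist_commute)
    then show "v (\<alpha>s n) y (\<eta>s n) - \<Phi> y \<le> v (\<alpha>s n) (zs n) (\<eta>s n) - \<Phi> (zs n)"
      using zs_max(2)[of y n] unfolding gap_def vrel_def by simp
  qed
qed

definition "kmass s = integral {a..b} (k s)"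
definition "erg n = \<alpha>s n * v (\<alpha>s n) x0 (\<eta>s n) + Theta a b k (v (\<alpha>s n)) x0 (\<eta>s n)"
definition "kvz n = integral {a..b} (\<lambda>\<eta>. k (\<eta>s n) \<eta> * vrel (\<alpha>s n) (zs n) \<eta>)"
definition "kfrozen n = integral {a..b} (\<lambda>\<eta>. k \<xi> \<eta> * vrel (\<alpha>s n) (zs n) \<eta>)"
definition "kdrift n = integral {a..b} (\<lambda>\<eta>. (k (\<eta>s n) \<eta> - k \<xi> \<eta>) * vrel (\<alpha>s n) (zs n) \<eta>)"
definition "klim \<eta> = k \<xi> \<eta> * vbar xh \<eta>"
definition "kmax n \<eta> = max (k \<xi> \<eta> * vrel (\<alpha>s n) (zs n) \<eta>) (klim \<eta>)"

lemma subsol_terms_split: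
  "\<alpha>s n * v (\<alpha>s n) (zs n) (\<eta>s n) + Theta a b k (v (\<alpha>s n)) (zs n) (\<eta>s n)
     = \<alpha>s n * vz n + vz n * kmass (\<eta>s n) - kvz n + erg n"
proof -
  have kc: "continuous_on {a..b} (k (\<eta>s n))" by (rule k_slice_cont[OF \<eta>s_mem])
  have "Theta a b k (v (\<alpha>s n)) (zs n) (\<eta>s n)
      = Theta a b k (vrel (\<alpha>s n)) (zs n) (\<eta>s n) + Theta a b k (v (\<alpha>s n)) x0 (\<eta>s n)"
    using Theta_normalize[where v="v (\<alpha>s n)" and k=k and \<xi>="\<eta>s n" and x="zs n" and x0=x0,
        OF kc v_slice_cont[OF \<alpha>s_pos] v_slice_cont[OF \<alpha>s_pos]]
    unfolding vrel_def[abs_def] .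
  moreover have "Theta a b k (vrel (\<alpha>s n)) (zs n) (\<eta>s n)
      = integral {a..b} (\<lambda>\<eta>. k (\<eta>s n) \<eta> * vz n) - kvz n"
    unfolding Theta_def kvz_def vz_def right_diff_distrib
    by (intro integral_diff integrable_continuous_interval continuous_intros kc vrel_slice_cont \<alpha>s_pos)
  moreover have "integral {a..b} (\<lambda>\<eta>. k (\<eta>s n) \<eta> * vz n) = kmass (\<eta>s n) * vz n"
    unfolding kmass_def by (rule integral_mult_left)
  moreover have "\<alpha>s n * v (\<alpha>s n) (zs n) (\<eta>s n) = \<alpha>s n * vz n + \<alpha>s n * v (\<alpha>s n) x0 (\<eta>s n)"
    unfolding vz_def vrel_def by (simp add: algebra_simps)
  ultimately show ?thesis unfolding erg_def by (simp add: algebra_simps)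
qed

lemma kvz_split: "kvz n = kfrozen n + kdrift n"
proof -
  have "kvz n = integral {a..b}
      (\<lambda>\<eta>. k \<xi> \<eta> * vrel (\<alpha>s n) (zs n) \<eta> + (k (\<eta>s n) \<eta> - k \<xi> \<eta>) * vrel (\<alpha>s n) (zs n) \<eta>)"
    unfolding kvz_def by (simp add: algebra_simps)
  also have "\<dots> = kfrozen n + kdrift n"
    unfolding kfrozen_def kdrift_def
    by (intro integral_add integrable_continuous_interval continuous_intros k_slice_cont \<xi> \<eta>s_mem
        vrel_slice_cont \<alpha>s_pos)
  finally show ?thesis .
qed

lemma k_abs_le: "s \<in> {a..b} \<Longrightarrow> \<eta> \<in> {a..b} \<Longrightarrow> \<bar>k s \<eta>\<bar> \<le> k1"
  using k_bounds[of s \<eta>] by auto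

lemma klim_bound: "\<eta> \<in> {a..b} \<Longrightarrow> \<bar>klim \<eta>\<bar> \<le> k1 * B"
  unfolding klim_def abs_mult using k_abs_le[OF \<xi>, of \<eta>] upper_relax_eq_vbar(2)[of \<eta> xh] B_nonneg
  by (intro mult_mono) (auto intro: order_trans[OF abs_ge_zero])

lemma kmax_bound: "\<eta> \<in> {a..b} \<Longrightarrow> \<bar>kmax n \<eta>\<bar> \<le> k1 * B"
proof -
  assume \<eta>: "\<eta> \<in> {a..b}"
  have "\<bar>k \<xi> \<eta> * vrel (\<alpha>s n) (zs n) \<eta>\<bar> \<le> k1 * B"
    unfolding abs_mult using k_abs_le[OF \<xi> \<eta>] vrel_\<alpha>s_bound[OF \<eta>] by (intro mult_mono) auto
  then show ?thesis using klim_bound[OF \<eta>] unfolding kmax_def by auto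
qed

lemma klim_measurable: "klim \<in> borel_measurable (lebesgue_on {a..b})"
proof -
  have "k \<xi> \<in> borel_measurable (lebesgue_on {a..b})"
    by (rule continuous_imp_measurable_on_sets_lebesgue[OF k_slice_cont[OF \<xi>]])
      (metis borel_closed closed_atLeastAtMost sets_completionI_sets sets_lborel)
  then show ?thesis unfolding klim_def[abs_def] using vbar_measurable by (rule borel_measurable_times)
qed

lemma kmax_measurable: "kmax n \<in> borel_measurable (lebesgue_on {a..b})"
proof -
  have "(\<lambda>\<eta>. k \<xi> \<eta> * vrel (\<alpha>s n) (zs n) \<eta>) \<in> borel_measurable (lebesgue_on {a..b})"
    by (intro continuous_imp_measurable_on_sets_lebesgue continuous_intros k_slice_cont \<xi>
        vrel_slice_cont \<alpha>s_pos)
      (metis borel_closed closed_atLeastAtMost sets_completionI_sets sets_lborel)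
  then show ?thesis unfolding kmax_def[abs_def] by (rule borel_measurable_max[OF klim_measurable])
qed

lemma kmax_tendsto: "\<eta> \<in> {a..b} \<Longrightarrow> (\<lambda>n. kmax n \<eta>) \<longlonglongrightarrow> klim \<eta>"
proof (rule tendstoI)
  fix \<epsilon> :: real assume \<eta>: "\<eta> \<in> {a..b}" and \<epsilon>: "0 < \<epsilon>"
  define \<epsilon>' where "\<epsilon>' = \<epsilon> / (k1 + 1)"
  have k10: "0 \<le> k1" using k_bounds[OF \<eta> \<eta>] by linarith
  have \<epsilon>': "0 < \<epsilon>'" "k1 * \<epsilon>' < \<epsilon>" unfolding \<epsilon>'_def using \<epsilon> k10 by (simp_all add: field_simps)
  obtain r where r: "0 < r"
    "\<And>\<alpha> y \<eta>'. (\<alpha>, y, \<eta>') \<in> relax_set a b xh \<eta> r \<Longrightarrow> vrel \<alpha> y \<eta>' \<le> vbar xh \<eta> + \<epsilon>'"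
    using vrel_le_vbar_near[OF \<eta> \<epsilon>'(1)] by blast
  have "\<forall>\<^sub>F n in sequentially. dist (zs n) xh < r/2" by (rule zs_eventually_near) (use r in simp)
  moreover have "\<forall>\<^sub>F n in sequentially. rr n < r/2" by (rule rr_eventually_less) (use r in simp)
  ultimately show "\<forall>\<^sub>F n in sequentially. dist (kmax n \<eta>) (klim \<eta>) < \<epsilon>"
  proof eventually_elim
    case (elim n)
    have "(\<alpha>s n, zs n, \<eta>) \<in> relax_set a b xh \<eta> r"
      using elim \<alpha>s_le[of n] \<alpha>s_pos \<eta> unfolding relax_set_def by (simp add: dist_commute)
    then have "vrel (\<alpha>s n) (zs n) \<eta> \<le> vbar xh \<eta> + \<epsilon>'" by (rule r(2))
    then have "k \<xi> \<eta> * vrel (\<alpha>s n) (zs n) \<eta> \<le> klim \<eta> + k \<xi> \<eta> * \<epsilon>'"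
      using k_bounds[OF \<xi> \<eta>] unfolding klim_def by (simp add: mult_left_mono flip: distrib_left)
    also have "k \<xi> \<eta> * \<epsilon>' \<le> k1 * \<epsilon>'" using k_bounds[OF \<xi> \<eta>] \<epsilon>' by (intro mult_right_mono) auto
    finally have "klim \<eta> \<le> kmax n \<eta>" "kmax n \<eta> < klim \<eta> + \<epsilon>"
      using \<epsilon>' \<epsilon> unfolding kmax_def by auto
    then show "dist (kmax n \<eta>) (klim \<eta>) < \<epsilon>" by (simp add: dist_real_def)
  qed
qed

lemma integral_kmax_tendsto: "(\<lambda>n. integral {a..b} (kmax n)) \<longlonglongrightarrow> integral {a..b} klim"
proof (rule dominated_convergence(2)[where h="\<lambda>_. k1 * B"])
  show "kmax n integrable_on {a..b}" for n
    by (rule bounded_measurable_integrable_on[OF kmax_measurable kmax_bound])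
qed (use kmax_bound kmax_tendsto in auto)

lemma kfrozen_le: "kfrozen n \<le> integral {a..b} (kmax n)"
  unfolding kfrozen_def
proof (rule integral_le)
  show "(\<lambda>\<eta>. k \<xi> \<eta> * vrel (\<alpha>s n) (zs n) \<eta>) integrable_on {a..b}"
    by (intro integrable_continuous_interval continuous_intros k_slice_cont \<xi> vrel_slice_cont \<alpha>s_pos)
  show "kmax n integrable_on {a..b}"
    by (rule bounded_measurable_integrable_on[OF kmax_measurable kmax_bound])
qed (simp add: kmax_def)

lemma kdrift_tendsto: "kdrift \<longlonglongrightarrow> 0"
proof (rule tendstoI)
  fix \<epsilon> :: real assume \<epsilon>: "0 < \<epsilon>"
  define \<epsilon>' where "\<epsilon>' = \<epsilon> / (B + 1)"
  have \<epsilon>': "0 < \<epsilon>'" "\<epsilon>' * B < \<epsilon>" unfolding \<epsilon>'_def using \<epsilon> B_nonneg by (simp_all add: field_simps)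
  obtain d where d: "0 < d" "\<And>s t \<eta>. s \<in> {a..b} \<Longrightarrow> t \<in> {a..b} \<Longrightarrow> \<eta> \<in> {a..b} \<Longrightarrow>
      \<bar>s - t\<bar> < d \<Longrightarrow> \<bar>k s \<eta> - k t \<eta>\<bar> < \<epsilon>'"
    using k_uniformly_cont[OF \<epsilon>'(1)] by blast
  have "\<forall>\<^sub>F n in sequentially. dist (\<eta>s n) \<xi> < d" using \<eta>s_lim d(1) by (simp add: tendsto_iff)
  then show "\<forall>\<^sub>F n in sequentially. dist (kdrift n) 0 < \<epsilon>"
  proof (rule eventually_mono)
    fix n assume dn: "dist (\<eta>s n) \<xi> < d"
    have "\<bar>kdrift n\<bar> \<le> \<epsilon>' * B" unfolding kdrift_def
    proof (rule abs_integral_le_const_unit[OF I_len])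
      show "(\<lambda>\<eta>. (k (\<eta>s n) \<eta> - k \<xi> \<eta>) * vrel (\<alpha>s n) (zs n) \<eta>) integrable_on {a..b}"
        by (intro integrable_continuous_interval continuous_intros k_slice_cont \<xi> \<eta>s_mem
            vrel_slice_cont \<alpha>s_pos)
      fix \<eta> assume \<eta>: "\<eta> \<in> {a..b}"
      have "\<bar>k (\<eta>s n) \<eta> - k \<xi> \<eta>\<bar> < \<epsilon>'" using d(2)[OF \<eta>s_mem \<xi> \<eta>] dn by (simp add: dist_real_def)
      then show "\<bar>(k (\<eta>s n) \<eta> - k \<xi> \<eta>) * vrel (\<alpha>s n) (zs n) \<eta>\<bar> \<le> \<epsilon>' * B"
        unfolding abs_mult using vrel_\<alpha>s_bound[OF \<eta>] by (intro mult_mono) auto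
    qed
    then show "dist (kdrift n) 0 < \<epsilon>" using \<epsilon>' by simp
  qed
qed

lemma H_tendsto: "(\<lambda>n. H (zs n) (D\<Phi> (zs n)) (\<eta>s n)) \<longlonglongrightarrow> H xh (D\<phi> xh) \<xi>"
proof -
  have "(\<lambda>n. D\<Phi> (zs n)) \<longlonglongrightarrow> D\<Phi> xh"
    using isCont_tendsto_compose[OF _ zs_lim, of D\<Phi>] C1_torus_\<Phi>
    unfolding C1_torus_def continuous_on_eq_continuous_at[OF open_UNIV] by blast
  then have "(\<lambda>n. (zs n, D\<Phi> (zs n), \<eta>s n)) \<longlonglongrightarrow> (xh, D\<Phi> xh, \<xi>)"
    by (intro tendsto_Pair zs_lim \<eta>s_lim)
  from continuous_on_tendsto_compose[OF H_cont this]
  show ?thesis using \<xi> \<eta>s_mem by (simp add: always_eventually)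
qed

lemma kmass_tendsto: "(\<lambda>n. kmass (\<eta>s n)) \<longlonglongrightarrow> kmass \<xi>"
  unfolding kmass_def using \<xi> \<eta>s_mem
  by (intro continuous_on_tendsto_compose[OF k_mass_cont \<eta>s_lim]) (auto intro: always_eventually)

lemma erg_tendsto: "erg \<longlonglongrightarrow> - c \<xi>"
proof -
  have "(\<lambda>n. erg n - (- c (\<eta>s n))) \<longlonglongrightarrow> 0"
  proof (rule tendstoI)
    fix \<epsilon> :: real assume "0 < \<epsilon>"
    then have "\<forall>\<^sub>F \<alpha> in at_right 0. \<forall>\<xi>'\<in>{a..b}.
        dist (\<alpha> * v \<alpha> x0 \<xi>' + Theta a b k (v \<alpha>) x0 \<xi>') (- c \<xi>') < \<epsilon>"
      using ergodic unfolding uniform_limit_iff by blast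
    from filterlim_iff[THEN iffD1, OF \<alpha>s_at_right, rule_format, OF this]
    show "\<forall>\<^sub>F n in sequentially. dist (erg n - - c (\<eta>s n)) 0 < \<epsilon>"
      by eventually_elim (use \<eta>s_mem in \<open>simp add: erg_def dist_real_def\<close>)
  qed
  moreover have "(\<lambda>n. - c (\<eta>s n)) \<longlonglongrightarrow> - c \<xi>"
    using \<xi> \<eta>s_mem
    by (intro tendsto_minus continuous_on_tendsto_compose[OF c_cont \<eta>s_lim])
      (auto intro: always_eventually)
  ultimately show ?thesis using tendsto_add by fastforce
qed

lemma Theta_vbar_eq: "Theta a b k vbar xh \<xi> = vbar xh \<xi> * kmass \<xi> - integral {a..b} klim"
proof -
  have "Theta a b k vbar xh \<xi> = integral {a..b} (\<lambda>\<eta>. k \<xi> \<eta> * vbar xh \<xi> - klim \<eta>)"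
    unfolding Theta_def klim_def by (simp add: right_diff_distrib)
  also have "\<dots> = integral {a..b} (\<lambda>\<eta>. k \<xi> \<eta> * vbar xh \<xi>) - integral {a..b} klim"
    by (intro integral_diff integrable_continuous_interval continuous_intros k_slice_cont \<xi>
        bounded_measurable_integrable_on[OF klim_measurable klim_bound])
  finally show ?thesis unfolding kmass_def by simp
qed

lemma subsolution_at_touching_point: "H xh (D\<phi> xh) \<xi> + Theta a b k vbar xh \<xi> \<le> c \<xi>"
proof -
  define L where "L n = \<alpha>s n * vz n + H (zs n) (D\<Phi> (zs n)) (\<eta>s n) + vz n * kmass (\<eta>s n)
      - (integral {a..b} (kmax n) + kdrift n) + erg n" for n
  have "\<forall>\<^sub>F n in sequentially. L n \<le> 0"
    using zs_touching
  proof (rule eventually_mono)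
    fix n assume touch_n: "loc_max (\<lambda>y. v (\<alpha>s n) y (\<eta>s n) - \<Phi> y) (zs n)"
    have "\<alpha>s n * v (\<alpha>s n) (zs n) (\<eta>s n) + H (zs n) (D\<Phi> (zs n)) (\<eta>s n)
        + Theta a b k (v (\<alpha>s n)) (zs n) (\<eta>s n) \<le> 0"
      by (rule v_sub[OF \<alpha>s_pos C1_torus_\<Phi> \<eta>s_mem touch_n])
    then show "L n \<le> 0"
      unfolding L_def using subsol_terms_split[of n] kvz_split[of n] kfrozen_le[of n] by linarith
  qed
  moreover have "L \<longlonglongrightarrow> 0 * vbar xh \<xi> + H xh (D\<phi> xh) \<xi> + vbar xh \<xi> * kmass \<xi>
      - (integral {a..b} klim + 0) + - c \<xi>"
    unfolding L_def[abs_def]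
    by (intro tendsto_intros \<alpha>s_lim vz_lim H_tendsto kmass_tendsto integral_kmax_tendsto
        kdrift_tendsto erg_tendsto)
  ultimately show ?thesis
    using tendsto_upperbound[of L _ sequentially 0] unfolding Theta_vbar_eq by fastforce
qed

end

context half_relaxed_setting
begin

lemma upper_relax_finite: "\<xi> \<in> {a..b} \<Longrightarrow> \<bar>upper_relax a b v x0 x \<xi>\<bar> \<noteq> \<infinity>"
  using upper_relax_eq_vbar(1) by simp

lemma visc_sub_vbar: "visc_sub a b H k c vbar"
  unfolding visc_sub_def
proof (intro allI impI)
  fix \<phi> D\<phi> \<xi> xh
  assume \<phi>: "C1_torus \<phi> D\<phi>" and \<xi>: "\<xi> \<in> {a..b}" and "loc_max (\<lambda>y. vbar y \<xi> - \<phi> y) xh"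
  then obtain e where "0 < e" "\<And>y. dist y xh < e \<Longrightarrow> vbar y \<xi> - \<phi> y \<le> vbar xh \<xi> - \<phi> xh"
    unfolding loc_max_def by blast
  with \<phi> \<xi> have "touching_point a b H k v c x0 k1 \<alpha>0 B \<phi> D\<phi> \<xi> xh e"
    by (intro touching_point.intro half_relaxed_setting_axioms touching_point_axioms.intro)
  then show "H xh (D\<phi> xh) \<xi> + Theta a b k vbar xh \<xi> \<le> c \<xi>"
    by (rule touching_point.subsolution_at_touching_point)
qed

end

lemma half_relaxed_setting_reflect:
  assumes "half_relaxed_setting a b H k v c x0 k1 \<alpha>0 B"
    and v_sup: "\<And>\<alpha> \<phi> D\<phi> \<xi> xh. 0 < \<alpha> \<Longrightarrow> C1_torus \<phi> D\<phi> \<Longrightarrow> \<xi> \<in> {a..b} \<Longrightarrow>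
        loc_min (\<lambda>y. v \<alpha> y \<xi> - \<phi> y) xh \<Longrightarrow>
        \<alpha> * v \<alpha> xh \<xi> + H xh (D\<phi> xh) \<xi> + Theta a b k (v \<alpha>) xh \<xi> \<ge> 0"
  shows "half_relaxed_setting a b (\<lambda>x p \<xi>. - H x (- p) \<xi>) k (\<lambda>\<alpha> x \<xi>. - v \<alpha> x \<xi>) (\<lambda>\<xi>. - c \<xi>)
    x0 k1 \<alpha>0 B"
proof -
  interpret half_relaxed_setting a b H k v c x0 k1 \<alpha>0 B by fact
  show ?thesis
  proof unfold_locales
    have "continuous_on (UNIV \<times> UNIV \<times> {a..b})
        (\<lambda>q. - (\<lambda>(x, p, \<xi>). H x p \<xi>) (fst q, - fst (snd q), snd (snd q)))"
      by (intro continuous_on_minus continuous_on_compose2[OF H_cont]) (auto intro!: continuous_intros)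
    then show "continuous_on (UNIV \<times> UNIV \<times> {a..b}) (\<lambda>(x, p, \<xi>). - H x (- p) \<xi>)"
      by (simp add: case_prod_beta)
    show "continuous_on (UNIV \<times> {a..b}) (\<lambda>(x, \<xi>). - v \<alpha> x \<xi>)" if "0 < \<alpha>" for \<alpha>
      using continuous_on_minus[OF v_cont[OF that]] by (simp add: case_prod_beta)
    show "\<alpha> * - v \<alpha> xh \<xi> + - H xh (- D\<phi> xh) \<xi> + Theta a b k (\<lambda>x \<xi>. - v \<alpha> x \<xi>) xh \<xi> \<le> 0"
      if "0 < \<alpha>" "C1_torus \<phi> D\<phi>" "\<xi> \<in> {a..b}" "loc_max (\<lambda>y. - v \<alpha> y \<xi> - \<phi> y) xh"
      for \<alpha> \<phi> D\<phi> \<xi> xh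
    proof -
      have "loc_min (\<lambda>y. v \<alpha> y \<xi> - - \<phi> y) xh"
        using that(4) unfolding loc_max_def loc_min_def by (auto simp: algebra_simps)
      from v_sup[OF that(1) C1_torus_uminus[OF that(2)] that(3) this]
      show ?thesis by (simp add: Theta_uminus)
    qed
    show "uniform_limit {a..b} (\<lambda>\<alpha> \<xi>. \<alpha> * - v \<alpha> x0 \<xi> + Theta a b k (\<lambda>x \<xi>. - v \<alpha> x \<xi>) x0 \<xi>)
        (\<lambda>\<xi>. - (- c \<xi>)) (at_right 0)"
      using uniform_limit_uminus[OF ergodic] by (simp add: Theta_uminus)
    show "\<bar>- v \<alpha> x \<xi> - - v \<alpha> x0 \<xi>\<bar> \<le> B" if "0 < \<alpha>" "\<alpha> \<le> \<alpha>0" "\<xi> \<in> {a..b}" for \<alpha> x \<xi>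
      using v_bound[OF that, of x] by simp
  qed (use I_len k_cont k_bounds \<alpha>0 in auto)
qed

lemma visc_super_of_reflected_visc_sub:
  assumes sub: "visc_sub a b (\<lambda>x p \<xi>. - H x (- p) \<xi>) k (\<lambda>\<xi>. - c \<xi>) w"
    and u: "\<And>x \<xi>. \<xi> \<in> {a..b} \<Longrightarrow> u x \<xi> = - w x \<xi>"
  shows "visc_super a b H k c u"
  unfolding visc_super_def
proof (intro allI impI)
  fix \<psi> D\<psi> \<xi> xh
  assume \<psi>: "C1_torus \<psi> D\<psi>" and \<xi>: "\<xi> \<in> {a..b}" and "loc_min (\<lambda>y. u y \<xi> - \<psi> y) xh"
  then have "loc_max (\<lambda>y. w y \<xi> - - \<psi> y) xh"
    unfolding loc_min_def loc_max_def using u[OF \<xi>] by (auto simp: algebra_simps)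
  with sub C1_torus_uminus[OF \<psi>] \<xi>
  have "- H xh (D\<psi> xh) \<xi> + Theta a b k w xh \<xi> \<le> - c \<xi>"
    unfolding visc_sub_def by fastforce
  moreover have "Theta a b k u xh \<xi> = Theta a b k (\<lambda>x \<xi>. - w x \<xi>) xh \<xi>"
    unfolding Theta_def using u \<xi> by (intro integral_cong) simp
  then have "Theta a b k u xh \<xi> = - Theta a b k w xh \<xi>" by (simp add: Theta_uminus)
  ultimately show "H xh (D\<psi> xh) \<xi> + Theta a b k u xh \<xi> \<ge> c \<xi>" by simp
qed

theorem mainTheorem11:
  fixes a b :: real
    and H :: "real^'d \<Rightarrow> real^'d \<Rightarrow> real \<Rightarrow> real"
    and k :: "real \<Rightarrow> real \<Rightarrow> real"
    and v :: "real \<Rightarrow> real^'d \<Rightarrow> real \<Rightarrow> real"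
    and c :: "real \<Rightarrow> real"
    and x0 :: "real^'d"
    and k0 k1 C1 C2 m :: real
  assumes I_len: "b - a = 1"
    and H_cont: "continuous_on (UNIV \<times> UNIV \<times> {a..b}) (\<lambda>(x, p, \<xi>). H x p \<xi>)"
    and H_per: "\<And>p \<xi>. Zperiodic (\<lambda>x. H x p \<xi>)"
    and B1: "C1 > 0" "C2 > 0" "m > 1"
        "\<And>x p \<xi>. \<xi> \<in> {a..b} \<Longrightarrow> C1 * norm p powr m - C2 \<le> H x p \<xi>"
    and B2: "\<And>R. R > 0 \<Longrightarrow> \<exists>\<omega>. modulus \<omega> \<and>
        (\<forall>x y p \<xi>. norm p \<le> R \<longrightarrow> \<xi> \<in> {a..b} \<longrightarrow> \<bar>H x p \<xi> - H y p \<xi>\<bar> \<le> \<omega> (dist x y))"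
    and k_cont: "continuous_on ({a..b} \<times> {a..b}) (\<lambda>(\<xi>, \<eta>). k \<xi> \<eta>)"
    and k_bounds: "0 < k0" "k0 \<le> k1"
        "\<And>\<xi> \<eta>. \<xi> \<in> {a..b} \<Longrightarrow> \<eta> \<in> {a..b} \<Longrightarrow> k0 \<le> k \<xi> \<eta> \<and> k \<xi> \<eta> \<le> k1"
    and v_sol: "\<And>\<alpha>. \<alpha> > 0 \<Longrightarrow> DP_solution a b H k \<alpha> (v \<alpha>)"
    and ergodic: "uniform_limit {a..b}
        (\<lambda>\<alpha> \<xi>. \<alpha> * v \<alpha> x0 \<xi> + Theta a b k (v \<alpha>) x0 \<xi>) (\<lambda>\<xi>. - c \<xi>) (at_right 0)"
  shows "(\<forall>x. \<forall>\<xi>\<in>{a..b}. \<bar>upper_relax a b v x0 x \<xi>\<bar> \<noteq> \<infinity>)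
      \<and> visc_sub a b H k c (\<lambda>x \<xi>. real_of_ereal (upper_relax a b v x0 x \<xi>))
      \<and> (\<forall>x. \<forall>\<xi>\<in>{a..b}. \<bar>lower_relax a b v x0 x \<xi>\<bar> \<noteq> \<infinity>)
      \<and> visc_super a b H k c (\<lambda>x \<xi>. real_of_ereal (lower_relax a b v x0 x \<xi>))"
proof -
  have k_nonneg: "\<And>\<xi> \<eta>. \<xi> \<in> {a..b} \<Longrightarrow> \<eta> \<in> {a..b} \<Longrightarrow> 0 \<le> k \<xi> \<eta> \<and> k \<xi> \<eta> \<le> k1"
    using k_bounds by fastforce
  obtain \<alpha>0 B where "0 < \<alpha>0"
    "\<And>\<alpha> x \<xi>. 0 < \<alpha> \<Longrightarrow> \<alpha> \<le> \<alpha>0 \<Longrightarrow> \<xi> \<in> {a..b} \<Longrightarrow> \<bar>v \<alpha> x \<xi> - v \<alpha> x0 \<xi>\<bar> \<le> B"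
    using DP_solutions_uniform_osc_bound[OF I_len B1(1) less_imp_le[OF B1(2)] B1(3,4) k_cont
        k_nonneg v_sol ergodic] by blast
  with v_sol interpret V: half_relaxed_setting a b H k v c x0 k1 \<alpha>0 B
    using I_len H_cont k_cont k_nonneg ergodic by unfold_locales (auto simp: DP_solution_def)
  interpret W: half_relaxed_setting a b "\<lambda>x p \<xi>. - H x (- p) \<xi>" k "\<lambda>\<alpha> x \<xi>. - v \<alpha> x \<xi>"
      "\<lambda>\<xi>. - c \<xi>" x0 k1 \<alpha>0 B
    using v_sol unfolding DP_solution_def
    by (intro half_relaxed_setting_reflect[OF V.half_relaxed_setting_axioms]) blast
  have lower: "lower_relax a b v x0 x \<xi> = ereal (- W.vbar x \<xi>)" if "\<xi> \<in> {a..b}" for x \<xi>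
    using lower_relax_eq_uminus[OF W.sup_near_tendsto_vbar[OF that, unfolded W.sup_near_def W.vrel_def]]
    by simp
  show ?thesis
    using V.upper_relax_finite V.visc_sub_vbar lower
      visc_super_of_reflected_visc_sub[OF W.visc_sub_vbar,
        of "\<lambda>x \<xi>. real_of_ereal (lower_relax a b v x0 x \<xi>)"]
    unfolding V.vbar_def[abs_def] by simp
qed

end
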